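(* Let $n\ge2$, $A=(a_{jk})\in\mathbb{R}^{n\times n}$, $\sigma_1,\dots,\sigma_n>0$, and let $X(t)$ be the stochastic replicator dynamics on $\Delta$ with pay-off matrix $A$ and noise coefficients $\sigma_j$ (see context). Let $k$ be a strict Nash equilibrium and suppose that $$a_{kk}>a_{jk}+\sigma_k^2\quad\text{for all }j\ne k.$$ Then $\mathbf{e}_k$ is asymptotically stochastically stable: for any neighborhood $U$ of $\mathbf{e}_k$ and any $\varepsilon>0$ there is a neighborhood $V$ of $\mathbf{e}_k$ such that $$P_{\mathbf{x}}\Big\{X(t)\in U\text{ for all }t\ge0,\ \lim_{t\to\infty}X(t)=\mathbf{e}_k\Big\}\ge1-\varepsilon$$ for every initial state $\mathbf{x}\in V\cap\Delta$.
   Context: $\Delta=\{\mathbf{y}\in(0,1)^n:\sum y_j=1\}$, $\overline\Delta$ its closure; $\mathbf{e}_k$ the $k$th unit vector, identified with pure strategy $k$. The stochastic replicator dynamics is the solution $X(t)\in\Delta$ of $dX(t)=\mathbf{b}(X(t))dt+C(X(t))dW(t)$, with $W$ an $n$-dimensional standard Brownian motion, $\mathbf{b}(\mathbf{x})=[\mathrm{diag}(x_1,\dots,x_n)-\mathbf{x}\mathbf{x}^T][A-\mathrm{diag}(\sigma_1^2,\dots,\sigma_n^2)]\mathbf{x}$, $C(\mathbf{x})=[\mathrm{diag}(x_1,\dots,x_n)-\mathbf{x}\mathbf{x}^T]\mathrm{diag}(\sigma_1,\dots,\sigma_n)$; $P_{\mathbf{x}}$ is the law of the process with $X(0)=\mathbf{x}$.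 A strategy $\mathbf{p}\in\overline\Delta$ is a strict Nash equilibrium if $\mathbf{p}^TA\mathbf{p}>\mathbf{q}^TA\mathbf{p}$ for all $\mathbf{q}\in\overline\Delta$, $\mathbf{q}\ne\mathbf{p}$; for a pure strategy $k$ this means $a_{kk}>a_{jk}$ for all $j\ne k$. *)

theory Defs
  imports "HOL-Probability.Probability"
begin

definition open_simplex :: "(real^'n) set" where
  "open_simplex = {y. (\<forall>j. 0 < y$j) \<and> (\<Sum>j\<in>UNIV. y$j) = 1}"

definition strict_nash :: "real^'n^'n \<Rightarrow> real^'n \<Rightarrow> bool" where
  "strict_nash A p \<longleftrightarrow> p \<in> closure open_simplex \<and>
     (\<forall>q \<in> closure open_simplex. q \<noteq> p \<longrightarrow> p \<bullet> (A *v p) > q \<bullet> (A *v p))"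

definition vdiag :: "real^'n \<Rightarrow> real^'n^'n" where
  "vdiag v = (\<chi> i j. if i = j then v$i else 0)"

definition outer :: "real^'n \<Rightarrow> real^'n^'n" where
  "outer x = (\<chi> i j. x$i * x$j)"

definition rep_drift :: "real^'n^'n \<Rightarrow> real^'n \<Rightarrow> real^'n \<Rightarrow> real^'n" where
  "rep_drift A \<sigma> x =
     (vdiag x - outer x) *v ((A - vdiag (\<chi> j. (\<sigma>$j)^2)) *v x)"

definition rep_diff :: "real^'n \<Rightarrow> real^'n \<Rightarrow> real^'n^'n" where
  "rep_diff \<sigma> x = (vdiag x - outer x) ** vdiag \<sigma>"

definition C2_with :: "(real^'n \<Rightarrow> real) \<Rightarrow> (real^'n \<Rightarrow> real^'n) \<Rightarrow> (real^'n \<Rightarrow> real^'n^'n) \<Rightarrow> bool" where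
  "C2_with f g H \<longleftrightarrow>
     (\<forall>y. (f has_derivative (\<lambda>h. g y \<bullet> h)) (at y)) \<and>
     (\<forall>y. (g has_derivative (\<lambda>h. H y *v h)) (at y)) \<and>
     continuous_on UNIV H"

definition rep_gen :: "real^'n^'n \<Rightarrow> real^'n \<Rightarrow> (real^'n \<Rightarrow> real^'n) \<Rightarrow> (real^'n \<Rightarrow> real^'n^'n) \<Rightarrow> real^'n \<Rightarrow> real" where
  "rep_gen A \<sigma> g H y =
     g y \<bullet> rep_drift A \<sigma> y +
     (1/2) * (\<Sum>i\<in>UNIV. \<Sum>j\<in>UNIV. (rep_diff \<sigma> y ** transpose (rep_diff \<sigma> y))$i$j * H y $i$j)"

definition nat_filtration :: "'w measure \<Rightarrow> (real \<Rightarrow> 'w \<Rightarrow> real^'n) \<Rightarrow> real \<Rightarrow> 'w set set" where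
  "nat_filtration M X s =
     sigma_sets (space M) (\<Union>r\<in>{0..s}. {X r -` B \<inter> space M | B. B \<in> sets borel})"

definition is_martingale :: "'w measure \<Rightarrow> (real \<Rightarrow> 'w set set) \<Rightarrow> (real \<Rightarrow> 'w \<Rightarrow> real) \<Rightarrow> bool" where
  "is_martingale M F Y \<longleftrightarrow>
     (\<forall>t\<ge>0. (\<forall>B \<in> sets borel. Y t -` B \<inter> space M \<in> F t) \<and> integrable M (Y t)) \<and>
     (\<forall>s t. 0 \<le> s \<longrightarrow> s \<le> t \<longrightarrow>
        (\<forall>E \<in> F s. (\<integral>\<omega>. indicator E \<omega> * Y t \<omega> \<partial>M) = (\<integral>\<omega>. indicator E \<omega> * Y s \<omega> \<partial>M)))"

text \<open>A process X on the probability space M with X(0) = x is a solution of the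
  stochastic replicator dynamics if it has continuous paths in the open_simplex and solves
  the martingale problem for the generator of the SDE (Stroock--Varadhan).\<close>
definition replicator_solution ::
  "real^'n^'n \<Rightarrow> real^'n \<Rightarrow> real^'n \<Rightarrow> 'w measure \<Rightarrow> (real \<Rightarrow> 'w \<Rightarrow> real^'n) \<Rightarrow> bool" where
  "replicator_solution A \<sigma> x M X \<longleftrightarrow>
     prob_space M \<and>
     (\<forall>t\<ge>0. X t \<in> borel_measurable M) \<and>
     (\<forall>\<omega>\<in>space M. X 0 \<omega> = x \<and> continuous_on {0..} (\<lambda>t. X t \<omega>) \<and>
                   (\<forall>t\<ge>0. X t \<omega> \<in> open_simplex)) \<and>
     (\<forall>f g H. C2_with f g H \<longrightarrow>
        is_martingale M (nat_filtration M X)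
          (\<lambda>t \<omega>. f (X t \<omega>) - f x - integral {0..t} (\<lambda>s. rep_gen A \<sigma> g H (X s \<omega>))))"

end

(*
  Near the vertex e_k the function V y = 1 - y_k is a Lyapunov function: being linear, its
  generator is minus the k-th drift component, and the gap condition a_kk - sigma_k^2 > a_jk makes
  that component at least c V close to e_k. Composing V with a concave C^2 cap of the identity
  gives a bounded function with non-positive generator on the whole simplex, so its value along
  the process is a nonnegative supermartingale. Doob's maximal inequality on dyadic grids, carried
  over to continuous paths, shows that with probability close to one the process never leaves
  {V <= a/2}. On that event the cap is inactive; for each level 1/(m+1), Markov's inequality for
  the generator integral forces V below a much smaller level theta_m before a time T_m, and the
  upcrossing bound keeps it below 1/(m+1) afterwards. The exceptional probabilities are summable.
*)

theory Submission
  imports Defs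
begin

section \<open>A concave \<open>C\<^sup>2\<close> cap of the identity\<close>

definition trunc_pow :: "nat \<Rightarrow> real \<Rightarrow> real" where
  "trunc_pow n u = (max 0 u) ^ n"

lemma has_real_derivative_trunc_pow:
  assumes "n \<ge> 1"
  shows "(trunc_pow (Suc n) has_real_derivative real (Suc n) * trunc_pow n x) (at x)"
proof (cases x "0::real" rule: linorder_cases)
  case less
  have ev: "\<forall>\<^sub>F y in nhds x. trunc_pow (Suc n) y = 0"
    using eventually_nhds_in_open[of "{..<0}" x] less by (auto elim!: eventually_mono simp: trunc_pow_def)
  have "(trunc_pow (Suc n) has_real_derivative 0) (at x)"
    using DERIV_cong_ev[OF refl ev refl] by simp
  with less assms show ?thesis
    by (simp add: trunc_pow_def zero_power)
next
  case greater
  have ev: "\<forall>\<^sub>F y in nhds x. trunc_pow (Suc n) y = y ^ Suc n"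
    using eventually_nhds_in_open[of "{0<..}" x] greater by (auto elim!: eventually_mono simp: trunc_pow_def)
  have "((\<lambda>y. y ^ Suc n) has_real_derivative real (Suc n) * x ^ n) (at x)"
    by (rule derivative_eq_intros refl | simp)+
  then have "(trunc_pow (Suc n) has_real_derivative real (Suc n) * x ^ n) (at x)"
    using DERIV_cong_ev[OF refl ev refl] by simp
  with greater show ?thesis
    by (simp add: trunc_pow_def)
next
  case equal
  have "((\<lambda>y. (trunc_pow (Suc n) y - trunc_pow (Suc n) 0) / (y - 0)) \<longlongrightarrow> 0) (at 0)"
  proof (rule Lim_null_comparison)
    show "\<forall>\<^sub>F y in at 0. norm ((trunc_pow (Suc n) y - trunc_pow (Suc n) 0) / (y - 0)) \<le> \<bar>y\<bar> ^ n"
      by (intro always_eventually allI) (simp add: trunc_pow_def max_def)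
    have "((\<lambda>y::real. \<bar>y\<bar> ^ n) \<longlongrightarrow> \<bar>0\<bar> ^ n) (at 0)"
      by (intro tendsto_intros)
    moreover have "\<bar>0::real\<bar> ^ n = 0"
      using assms by simp
    ultimately show "((\<lambda>y::real. \<bar>y\<bar> ^ n) \<longlongrightarrow> 0) (at 0)"
      by metis
  qed
  moreover have "real (Suc n) * trunc_pow n 0 = 0"
    using assms by (simp add: trunc_pow_def)
  ultimately show ?thesis
    using equal by (simp add: has_field_derivative_iff)
qed

lemma has_real_derivative_trunc_pow_shift:
  assumes "n \<ge> 1"
  shows "((\<lambda>v. trunc_pow (Suc n) (v - c)) has_real_derivative real (Suc n) * trunc_pow n (v - c)) (at v)"
  using DERIV_chain2[OF has_real_derivative_trunc_pow[OF assms] DERIV_diff[OF DERIV_ident DERIV_const]]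
  by simp

lemma has_real_derivative_trunc_pow3_shift:
  "((\<lambda>v. trunc_pow 3 (v - c)) has_real_derivative 3 * trunc_pow 2 (v - c)) (at v)"
  using has_real_derivative_trunc_pow_shift[of 2 c v] by (simp add: eval_nat_numeral)

lemma has_real_derivative_trunc_pow2_shift:
  "((\<lambda>v. trunc_pow 2 (v - c)) has_real_derivative 2 * trunc_pow 1 (v - c)) (at v)"
  using has_real_derivative_trunc_pow_shift[of 1 c v] by (simp add: eval_nat_numeral)

text \<open>With \<open>d = (b - a)/2\<close>, \<open>smooth_cap''\<close> is minus the tent of height \<open>1/d\<close> on \<open>[a, b]\<close>.
  Its integral is \<open>-1\<close>, so the cap is concave, has slope 1 below \<open>a\<close> and slope 0 above \<open>b\<close>.\<close>

definition smooth_cap :: "real \<Rightarrow> real \<Rightarrow> real \<Rightarrow> real" where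
  "smooth_cap a b v = v - (1 / (6 * ((b - a) / 2)^2)) *
     (trunc_pow 3 (v - a) - 2 * trunc_pow 3 (v - (a + b) / 2) + trunc_pow 3 (v - b))"

definition smooth_cap' :: "real \<Rightarrow> real \<Rightarrow> real \<Rightarrow> real" where
  "smooth_cap' a b v = 1 - (1 / (2 * ((b - a) / 2)^2)) *
     (trunc_pow 2 (v - a) - 2 * trunc_pow 2 (v - (a + b) / 2) + trunc_pow 2 (v - b))"

definition smooth_cap'' :: "real \<Rightarrow> real \<Rightarrow> real \<Rightarrow> real" where
  "smooth_cap'' a b v = - (1 / ((b - a) / 2)^2) *
     (trunc_pow 1 (v - a) - 2 * trunc_pow 1 (v - (a + b) / 2) + trunc_pow 1 (v - b))"

lemma has_real_derivative_smooth_cap: "(smooth_cap a b has_real_derivative smooth_cap' a b v) (at v)"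
proof -
  have "(smooth_cap a b has_real_derivative 1 - (1 / (6 * ((b - a) / 2)^2)) *
      (3 * trunc_pow 2 (v - a) - 2 * (3 * trunc_pow 2 (v - (a + b) / 2)) + 3 * trunc_pow 2 (v - b))) (at v)"
    unfolding smooth_cap_def
    by (intro DERIV_diff DERIV_add DERIV_cmult has_real_derivative_trunc_pow3_shift DERIV_ident)
  then show ?thesis
    by (simp add: smooth_cap'_def right_diff_distrib distrib_left)
qed

lemma has_real_derivative_smooth_cap': "(smooth_cap' a b has_real_derivative smooth_cap'' a b v) (at v)"
proof -
  have "(smooth_cap' a b has_real_derivative 0 - (1 / (2 * ((b - a) / 2)^2)) *
      (2 * trunc_pow 1 (v - a) - 2 * (2 * trunc_pow 1 (v - (a + b) / 2)) + 2 * trunc_pow 1 (v - b))) (at v)"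
    unfolding smooth_cap'_def
    by (intro DERIV_diff DERIV_add DERIV_cmult has_real_derivative_trunc_pow2_shift DERIV_const)
  then show ?thesis
    by (simp add: smooth_cap''_def right_diff_distrib distrib_left)
qed

lemma continuous_on_smooth_cap'': "continuous_on S (smooth_cap'' a b)"
  unfolding smooth_cap''_def trunc_pow_def by (intro continuous_intros)

lemma smooth_cap_below:
  assumes "a < b" "v \<le> a"
  shows "smooth_cap a b v = v" "smooth_cap' a b v = 1" "smooth_cap'' a b v = 0"
  using assms by (auto simp: smooth_cap_def smooth_cap'_def smooth_cap''_def trunc_pow_def max_def)

lemma smooth_cap_above:
  assumes "a < b" "b \<le> v"
  shows "smooth_cap' a b v = 0" "smooth_cap'' a b v = 0"
proof -
  have pos: "max 0 (v - a) = v - a" "max 0 (v - (a + b) / 2) = v - (a + b) / 2" "max 0 (v - b) = v - b"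
    using assms by auto
  have "(v - a)^2 - 2 * (v - (a + b) / 2)^2 + (v - b)^2 = 2 * ((b - a) / 2)^2"
    by (simp add: power2_eq_square field_simps)
  then show "smooth_cap' a b v = 0"
    using assms unfolding smooth_cap'_def trunc_pow_def pos by simp
  have "(v - a) - 2 * (v - (a + b) / 2) + (v - b) = 0"
    by (simp add: field_simps)
  then show "smooth_cap'' a b v = 0"
    unfolding smooth_cap''_def trunc_pow_def pos by simp
qed

lemma smooth_cap''_nonpos:
  assumes "a < b"
  shows "smooth_cap'' a b v \<le> 0"
proof -
  have "trunc_pow 1 (v - a) - 2 * trunc_pow 1 (v - (a + b) / 2) + trunc_pow 1 (v - b) \<ge> 0"
    using assms by (auto simp: trunc_pow_def max_def field_simps)
  then show ?thesis
    unfolding smooth_cap''_def by simp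
qed

lemma smooth_cap'_antimono:
  assumes "a < b" "v \<le> w"
  shows "smooth_cap' a b w \<le> smooth_cap' a b v"
  using has_real_derivative_smooth_cap' smooth_cap''_nonpos[OF assms(1)]
  by (intro DERIV_nonpos_imp_nonincreasing[OF assms(2)]) blast

lemma smooth_cap'_bounds:
  assumes "a < b"
  shows "0 \<le> smooth_cap' a b v" "smooth_cap' a b v \<le> 1"
  using smooth_cap'_antimono[OF assms, of v "max v b"] smooth_cap_above[OF assms, of "max v b"]
    smooth_cap'_antimono[OF assms, of "min v a" v] smooth_cap_below[OF assms, of "min v a"]
  by auto

lemma smooth_cap_mono:
  assumes "a < b" "v \<le> w"
  shows "smooth_cap a b v \<le> smooth_cap a b w"
  using has_real_derivative_smooth_cap smooth_cap'_bounds(1)[OF assms(1)]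
  by (intro DERIV_nonneg_imp_nondecreasing[OF assms(2)]) blast

lemma smooth_cap_le:
  assumes "a < b"
  shows "smooth_cap a b v \<le> v"
proof (cases "v \<le> a")
  case False
  have "smooth_cap a b v - v \<le> smooth_cap a b a - a"
  proof (rule DERIV_nonpos_imp_nonincreasing[of a v])
    show "a \<le> v" using False by simp
    fix x
    have "((\<lambda>v. smooth_cap a b v - v) has_real_derivative smooth_cap' a b x - 1) (at x)"
      by (intro DERIV_diff has_real_derivative_smooth_cap DERIV_ident)
    then show "\<exists>y. ((\<lambda>v. smooth_cap a b v - v) has_real_derivative y) (at x) \<and> y \<le> 0"
      using smooth_cap'_bounds(2)[OF assms, of x] by auto
  qed
  then show ?thesis
    using smooth_cap_below[OF assms order_refl] by simp
qed (simp add: smooth_cap_below[OF assms])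

lemma smooth_cap_ge:
  assumes "a < b" "a \<le> v"
  shows "a \<le> smooth_cap a b v"
  using smooth_cap_mono[OF assms] smooth_cap_below[OF assms(1) order_refl] by simp

section \<open>The simplex and the replicator coefficients\<close>

lemma open_simplex_nth_le:
  assumes "y \<in> open_simplex" "j \<noteq> k"
  shows "y$j \<le> 1 - y$k"
proof -
  have "y$j \<le> (\<Sum>i\<in>UNIV - {k}. y$i)"
    using assms by (intro member_le_sum) (auto simp: open_simplex_def less_imp_le)
  also have "\<dots> = 1 - y$k"
    using assms(1) sum.remove[of UNIV k "\<lambda>i. y$i"] by (simp add: open_simplex_def)
  finally show ?thesis .
qed

lemma open_simplex_nth_le_1:
  assumes "y \<in> open_simplex"
  shows "y$k \<le> 1"
proof -
  have "0 \<le> (\<Sum>i\<in>UNIV - {k}. y$i)"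
    using assms by (intro sum_nonneg) (auto simp: open_simplex_def less_imp_le)
  then show ?thesis
    using assms sum.remove[of UNIV k "\<lambda>i. y$i"] by (simp add: open_simplex_def)
qed

lemma abs_open_simplex_minus_axis_le:
  assumes "y \<in> open_simplex"
  shows "\<bar>y$j - axis k 1 $ j\<bar> \<le> 1 - y$k"
  using open_simplex_nth_le[OF assms, of j k] open_simplex_nth_le_1[OF assms, of k] assms
  by (cases "j = k") (auto simp: axis_def open_simplex_def less_imp_le)

lemma dist_axis_le_open_simplex:
  assumes "y \<in> open_simplex"
  shows "dist y (axis k 1) \<le> 2 * (1 - y$k)"
proof -
  have "dist y (axis k 1) \<le> (\<Sum>j\<in>UNIV. \<bar>(y - axis k 1)$j\<bar>)"
    unfolding dist_norm by (rule norm_le_l1_cart)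
  also have "\<dots> = (\<Sum>j\<in>UNIV. y$j + (if j = k then 1 - 2 * y$k else 0))"
    using assms open_simplex_nth_le_1[OF assms, of k]
    by (intro sum.cong) (auto simp: axis_def open_simplex_def less_imp_le)
  also have "\<dots> = 2 * (1 - y$k)"
    using assms by (simp add: sum.distrib open_simplex_def)
  finally show ?thesis .
qed

lemma tendsto_axis_open_simplex:
  assumes "\<forall>\<^sub>F t in F. p t \<in> open_simplex" "((\<lambda>t. 1 - p t $ k) \<longlongrightarrow> 0) F"
  shows "(p \<longlongrightarrow> axis k 1) F"
proof -
  have "((\<lambda>t. p t - axis k 1) \<longlongrightarrow> 0) F"
  proof (rule Lim_null_comparison)
    show "\<forall>\<^sub>F t in F. norm (p t - axis k 1) \<le> 2 * (1 - p t $ k)"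
      using assms(1) by eventually_elim (rule dist_axis_le_open_simplex[unfolded dist_norm])
    show "((\<lambda>t. 2 * (1 - p t $ k)) \<longlongrightarrow> 0) F"
      using tendsto_mult_right_zero[OF assms(2), of 2] by simp
  qed
  then show ?thesis
    by (simp add: LIM_zero_iff)
qed

lemma replicator_matrix_mult_nth:
  "((vdiag y - outer y) *v w) $ k = y$k * (w$k - y \<bullet> w)"
  by (simp add: matrix_vector_mult_def vdiag_def outer_def inner_vec_def left_diff_distrib
      right_diff_distrib sum_subtractf if_distrib[of "\<lambda>x. x * _"] sum_distrib_left mult.assoc
      cong: if_cong)

lemma rep_drift_nth:
  "rep_drift A \<sigma> y $ k =
     y$k * (((A - vdiag (\<chi> j. (\<sigma>$j)^2)) *v y)$k - y \<bullet> ((A - vdiag (\<chi> j. (\<sigma>$j)^2)) *v y))"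
  unfolding rep_drift_def by (rule replicator_matrix_mult_nth)

lemma diag_matrix_mult_transpose_nonneg:
  fixes C :: "real^'m^'n"
  shows "0 \<le> (C ** transpose C) $ i $ i"
  by (simp add: matrix_matrix_mult_def transpose_def sum_nonneg)

lemma continuous_on_vdiag [continuous_intros]:
  "continuous_on S f \<Longrightarrow> continuous_on S (\<lambda>x. vdiag (f x))"
  unfolding vdiag_def
  by (intro continuous_on_vec_lambda, rename_tac i j, case_tac "i = j") (auto intro: continuous_intros)

lemma continuous_on_outer [continuous_intros]:
  "continuous_on S f \<Longrightarrow> continuous_on S (\<lambda>x. outer (f x))"
  unfolding outer_def by (intro continuous_intros)

lemma continuous_on_rep_gen:
  assumes "continuous_on S g" "continuous_on S H"
  shows "continuous_on S (rep_gen A \<sigma> g H)"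
  unfolding rep_gen_def rep_drift_def rep_diff_def matrix_vector_mult_def matrix_matrix_mult_def
    transpose_def
  by (intro continuous_intros assms)

section \<open>Drift towards a vertex\<close>

lemma abs_matrix_vector_mult_minus_column_le:
  fixes B :: "real^'n^'n"
  assumes "y \<in> open_simplex"
  shows "\<bar>(B *v y)$i - B$i$k\<bar> \<le> (\<Sum>j\<in>UNIV. \<bar>B$i$j\<bar>) * (1 - y$k)"
proof -
  have "(B *v y)$i - B$i$k = (\<Sum>j\<in>UNIV. B$i$j * (y$j - axis k 1 $ j))"
    by (simp add: matrix_vector_mult_def right_diff_distrib sum_subtractf axis_def
        if_distrib[of "\<lambda>x. _ * x"] cong: if_cong)
  also have "\<bar>\<dots>\<bar> \<le> (\<Sum>j\<in>UNIV. \<bar>B$i$j\<bar> * (1 - y$k))"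
    by (rule order_trans[OF sum_abs], rule sum_mono)
      (simp add: abs_mult mult_left_mono abs_open_simplex_minus_axis_le[OF assms])
  finally show ?thesis
    by (simp add: sum_distrib_right)
qed

lemma replicator_gap_le:
  assumes "y \<in> open_simplex" "\<And>j. j \<noteq> k \<Longrightarrow> g \<le> w$k - w$j"
  shows "g * (1 - y$k) \<le> w$k - y \<bullet> w"
proof -
  have "g * (1 - y$k) = (\<Sum>j\<in>UNIV. g * (y$j - (if j = k then y$j else 0)))"
    using assms(1) by (simp add: open_simplex_def sum_subtractf sum_distrib_left[symmetric])
  also have "\<dots> \<le> (\<Sum>j\<in>UNIV. y$j * (w$k - w$j))"
    using assms by (intro sum_mono) (auto simp: open_simplex_def mult.commute intro: mult_left_mono)
  also have "\<dots> = w$k - y \<bullet> w"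
    using assms(1) by (simp add: open_simplex_def inner_vec_def right_diff_distrib sum_subtractf
        sum_distrib_right[symmetric])
  finally show ?thesis .
qed

text \<open>Near \<open>e\<^sub>k\<close> the payoffs \<open>B *v y\<close> are uniformly close to column \<open>k\<close> of \<open>B\<close>, so the
  gaps \<open>B\<^sub>k\<^sub>k - B\<^sub>j\<^sub>k\<close> persist; \<open>replicator_gap_le\<close> turns them into linear growth.\<close>

lemma replicator_vertex_drift_lower_bound:
  fixes B :: "real^'n^'n"
  assumes gap: "\<forall>j. j \<noteq> k \<longrightarrow> B$j$k < B$k$k"
  shows "\<exists>\<beta>>0. \<exists>c>0. \<forall>y\<in>open_simplex.
           1 - y$k < \<beta> \<longrightarrow> c * (1 - y$k) \<le> y$k * ((B *v y)$k - y \<bullet> (B *v y))"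
proof -
  define \<gamma> where "\<gamma> = Min (insert 1 ((\<lambda>j. B$k$k - B$j$k) ` (UNIV - {k})))"
  have "\<gamma> > 0"
    unfolding \<gamma>_def using gap by (subst Min_gr_iff) auto
  have \<gamma>_le: "\<gamma> \<le> B$k$k - B$j$k" if "j \<noteq> k" for j
    unfolding \<gamma>_def using that by (intro Min_le) auto
  define K where "K = (\<Sum>i\<in>UNIV. \<Sum>j\<in>UNIV. \<bar>B$i$j\<bar>)"
  have "K \<ge> 0"
    unfolding K_def by (intro sum_nonneg) auto
  have row_le_K: "(\<Sum>j\<in>UNIV. \<bar>B$i$j\<bar>) \<le> K" for i
    unfolding K_def by (rule member_le_sum) (auto intro: sum_nonneg)
  define \<beta> where "\<beta> = min (1/2) (\<gamma> / (4 * K + 1))"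
  have "\<gamma>/4 * (1 - y$k) \<le> y$k * ((B *v y)$k - y \<bullet> (B *v y))"
    if y: "y \<in> open_simplex" and near: "1 - y$k < \<beta>" for y
  proof -
    have "0 \<le> 1 - y$k"
      using open_simplex_nth_le_1[OF y] by simp
    have "K * (1 - y$k) \<le> \<gamma>/4"
      using near \<open>K \<ge> 0\<close> \<open>0 \<le> 1 - y$k\<close> by (simp add: \<beta>_def field_simps)
    then have close: "\<bar>(B *v y)$i - B$i$k\<bar> \<le> \<gamma>/4" for i
      using abs_matrix_vector_mult_minus_column_le[OF y, of B i k]
        mult_right_mono[OF row_le_K[of i] \<open>0 \<le> 1 - y$k\<close>] by linarith
    have "\<gamma>/2 \<le> (B *v y)$k - (B *v y)$j" if "j \<noteq> k" for j
      using close[of k] close[of j] \<gamma>_le[OF that] unfolding abs_le_iff by linarith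
    then have "\<gamma>/2 * (1 - y$k) \<le> (B *v y)$k - y \<bullet> (B *v y)"
      by (rule replicator_gap_le[OF y])
    moreover have "1/2 \<le> y$k"
      using near by (simp add: \<beta>_def)
    ultimately have "1/2 * (\<gamma>/2 * (1 - y$k)) \<le> y$k * ((B *v y)$k - y \<bullet> (B *v y))"
      using \<open>\<gamma> > 0\<close> \<open>0 \<le> 1 - y$k\<close> by (intro mult_mono) auto
    then show ?thesis
      by simp
  qed
  moreover have "\<beta> > 0" "\<gamma>/4 > 0"
    using \<open>\<gamma> > 0\<close> \<open>K \<ge> 0\<close> by (simp_all add: \<beta>_def)
  ultimately show ?thesis
    by blast
qed

lemma rep_drift_vertex_lower_bound:
  assumes "\<forall>j. j \<noteq> k \<longrightarrow> A$k$k > A$j$k + (\<sigma>$k)^2"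
  shows "\<exists>\<beta>>0. \<exists>c>0. \<forall>y\<in>open_simplex. 1 - y$k < \<beta> \<longrightarrow> c * (1 - y$k) \<le> rep_drift A \<sigma> y $ k"
proof -
  have "\<forall>j. j \<noteq> k \<longrightarrow> (A - vdiag (\<chi> j. (\<sigma>$j)^2))$j$k < (A - vdiag (\<chi> j. (\<sigma>$j)^2))$k$k"
    using assms by (simp add: vdiag_def less_diff_eq)
  from replicator_vertex_drift_lower_bound[OF this] show ?thesis
    by (simp only: rep_drift_nth)
qed

section \<open>A Lyapunov function for the vertex\<close>

definition bounded_superharmonic ::
  "real^'n^'n \<Rightarrow> real^'n \<Rightarrow> (real^'n \<Rightarrow> real) \<Rightarrow> (real^'n \<Rightarrow> real^'n) \<Rightarrow> (real^'n \<Rightarrow> real^'n^'n) \<Rightarrow> bool"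
where
  "bounded_superharmonic A \<sigma> f g H \<longleftrightarrow> C2_with f g H \<and>
     (\<forall>y\<in>open_simplex. 0 \<le> f y \<and> f y \<le> 1 \<and> rep_gen A \<sigma> g H y \<le> 0)"

lemma C2_with_continuous_on:
  assumes "C2_with f g H"
  shows "continuous_on S f" "continuous_on S (rep_gen A \<sigma> g H)"
proof -
  show "continuous_on S f"
    using assms unfolding C2_with_def
    by (intro continuous_at_imp_continuous_on ballI has_derivative_continuous) blast
  have "continuous_on S g"
    using assms unfolding C2_with_def
    by (intro continuous_at_imp_continuous_on ballI has_derivative_continuous) blast
  moreover have "continuous_on S H"
    using assms continuous_on_subset unfolding C2_with_def by blast
  ultimately show "continuous_on S (rep_gen A \<sigma> g H)"
    by (rule continuous_on_rep_gen)
qed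

lemma bounded_superharmonicD:
  assumes "bounded_superharmonic A \<sigma> f g H"
  shows "C2_with f g H" "continuous_on S f" "continuous_on S (rep_gen A \<sigma> g H)"
    and "y \<in> open_simplex \<Longrightarrow> 0 \<le> f y" "y \<in> open_simplex \<Longrightarrow> f y \<le> 1"
    and "y \<in> open_simplex \<Longrightarrow> \<bar>f y\<bar> \<le> 1" "y \<in> open_simplex \<Longrightarrow> rep_gen A \<sigma> g H y \<le> 0"
  using assms C2_with_continuous_on unfolding bounded_superharmonic_def by auto

definition lyap :: "real \<Rightarrow> real \<Rightarrow> 'n \<Rightarrow> real^'n \<Rightarrow> real" where
  "lyap a b k y = smooth_cap a b (1 - y$k)"

definition lyap_grad :: "real \<Rightarrow> real \<Rightarrow> 'n \<Rightarrow> real^'n \<Rightarrow> real^'n" where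
  "lyap_grad a b k y = (- smooth_cap' a b (1 - y$k)) *\<^sub>R axis k 1"

definition lyap_hess :: "real \<Rightarrow> real \<Rightarrow> 'n \<Rightarrow> real^'n \<Rightarrow> real^'n^'n" where
  "lyap_hess a b k y = (\<chi> i j. if i = k \<and> j = k then smooth_cap'' a b (1 - y$k) else 0)"

lemma C2_with_lyap:
  fixes k :: "'n::finite"
  shows "C2_with (lyap a b k) (lyap_grad a b k) (lyap_hess a b k)"
  unfolding C2_with_def
proof (intro conjI allI)
  fix y :: "real^'n"
  have coord: "((\<lambda>y::real^'n. 1 - y$k) has_derivative (\<lambda>h. - h$k)) (at y)"
    using bounded_linear_imp_has_derivative[OF bounded_linear_vec_nth, of k]
    by (intro derivative_eq_intros) auto
  have "((\<lambda>y. smooth_cap a b (1 - y$k)) has_derivative (\<lambda>h. - h$k * smooth_cap' a b (1 - y$k))) (at y)"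
    by (rule DERIV_compose_FDERIV[OF has_real_derivative_smooth_cap coord])
  moreover have "(\<lambda>h. - h$k * smooth_cap' a b (1 - y$k)) = (\<lambda>h. lyap_grad a b k y \<bullet> h)"
    by (auto simp: lyap_grad_def inner_axis' mult.commute)
  ultimately show "(lyap a b k has_derivative (\<lambda>h. lyap_grad a b k y \<bullet> h)) (at y)"
    unfolding lyap_def by simp
  have "((\<lambda>y. smooth_cap' a b (1 - y$k)) has_derivative (\<lambda>h. - h$k * smooth_cap'' a b (1 - y$k))) (at y)"
    by (rule DERIV_compose_FDERIV[OF has_real_derivative_smooth_cap' coord])
  then have "((\<lambda>y. (- smooth_cap' a b (1 - y$k)) *\<^sub>R (axis k 1 :: real^'n)) has_derivative
      (\<lambda>h. (- (- h$k * smooth_cap'' a b (1 - y$k))) *\<^sub>R axis k 1)) (at y)"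
    by (intro derivative_intros)
  moreover have "(\<lambda>h. (- (- h$k * smooth_cap'' a b (1 - y$k))) *\<^sub>R (axis k 1 :: real^'n)) =
      (\<lambda>h. lyap_hess a b k y *v h)"
  proof (intro ext iffD2[OF vec_eq_iff] allI)
    fix h :: "real^'n" and i
    show "((- (- h$k * smooth_cap'' a b (1 - y$k))) *\<^sub>R (axis k 1 :: real^'n)) $ i = (lyap_hess a b k y *v h) $ i"
      by (cases "i = k") (simp_all add: lyap_hess_def matrix_vector_mult_def axis_def
          if_distrib[of "\<lambda>x. x * _"] sum.delta cong: if_cong)
  qed
  ultimately show "(lyap_grad a b k has_derivative (\<lambda>h. lyap_hess a b k y *v h)) (at y)"
    unfolding lyap_grad_def by simp
next
  have "continuous_on UNIV (\<lambda>y::real^'n. smooth_cap'' a b (1 - y$k))"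
    by (rule continuous_on_compose2[OF continuous_on_smooth_cap''[of UNIV]]) (auto intro!: continuous_intros)
  then show "continuous_on UNIV (lyap_hess a b k)"
    unfolding lyap_hess_def
    by (intro continuous_on_vec_lambda, rename_tac i j, case_tac "i = k \<and> j = k") auto
qed

lemma rep_gen_lyap:
  "rep_gen A \<sigma> (lyap_grad a b k) (lyap_hess a b k) y =
     - smooth_cap' a b (1 - y$k) * rep_drift A \<sigma> y $ k
     + 1/2 * (rep_diff \<sigma> y ** transpose (rep_diff \<sigma> y)) $ k $ k * smooth_cap'' a b (1 - y$k)"
proof -
  have "\<And>P Q x. (if P \<and> Q then x else (0::real)) = (if Q then (if P then x else 0) else 0)"
    by auto
  then have "(\<Sum>i\<in>UNIV. \<Sum>j\<in>UNIV. (rep_diff \<sigma> y ** transpose (rep_diff \<sigma> y))$i$j * lyap_hess a b k y $i$j)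
     = (rep_diff \<sigma> y ** transpose (rep_diff \<sigma> y))$k$k * smooth_cap'' a b (1 - y$k)"
    by (simp only: lyap_hess_def vec_lambda_beta if_distrib[of "\<lambda>x. _ * x"] mult_zero_right
        sum.delta finite UNIV_I if_True)
  then show ?thesis
    by (simp add: rep_gen_def lyap_grad_def inner_axis' inner_commute)
qed

lemma lyap_bounds:
  assumes "0 < a" "a < b" "y \<in> open_simplex"
  shows "0 \<le> lyap a b k y" "lyap a b k y \<le> 1 - y$k" "lyap a b k y \<le> 1"
proof -
  show "lyap a b k y \<le> 1 - y$k"
    using smooth_cap_le[OF assms(2)] by (simp add: lyap_def)
  moreover have "0 < y$k"
    using assms(3) by (simp add: open_simplex_def)
  ultimately show "lyap a b k y \<le> 1"
    by linarith
  show "0 \<le> lyap a b k y"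
    using smooth_cap_below[OF assms(2), of "1 - y$k"] smooth_cap_ge[OF assms(2), of "1 - y$k"]
      assms(1) open_simplex_nth_le_1[OF assms(3), of k]
    by (cases "1 - y$k \<le> a") (auto simp: lyap_def)
qed

lemma rep_gen_lyap_below:
  assumes "a < b" "1 - y$k \<le> a"
  shows "rep_gen A \<sigma> (lyap_grad a b k) (lyap_hess a b k) y = - rep_drift A \<sigma> y $ k"
  using smooth_cap_below[OF assms] by (simp add: rep_gen_lyap)

lemma rep_gen_lyap_nonpos:
  assumes "a < b" "1 - y$k < b \<Longrightarrow> 0 \<le> rep_drift A \<sigma> y $ k"
  shows "rep_gen A \<sigma> (lyap_grad a b k) (lyap_hess a b k) y \<le> 0"
proof (cases "1 - y$k < b")
  case True
  then have "0 \<le> smooth_cap' a b (1 - y$k) * rep_drift A \<sigma> y $ k"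
    using assms smooth_cap'_bounds(1)[OF assms(1)] by simp
  moreover have "(rep_diff \<sigma> y ** transpose (rep_diff \<sigma> y)) $ k $ k * smooth_cap'' a b (1 - y$k) \<le> 0"
    by (rule mult_nonneg_nonpos[OF diag_matrix_mult_transpose_nonneg smooth_cap''_nonpos[OF assms(1)]])
  ultimately show ?thesis
    by (simp add: rep_gen_lyap)
qed (use smooth_cap_above[OF assms(1)] in \<open>simp add: rep_gen_lyap\<close>)

lemma bounded_superharmonic_lyap:
  assumes "0 < a" "a < b" "0 \<le> c"
    and drift: "\<And>y. y \<in> open_simplex \<Longrightarrow> 1 - y$k < b \<Longrightarrow> c * (1 - y$k) \<le> rep_drift A \<sigma> y $ k"
  shows "bounded_superharmonic A \<sigma> (lyap a b k) (lyap_grad a b k) (lyap_hess a b k)"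
proof -
  have "0 \<le> rep_drift A \<sigma> y $ k" if "y \<in> open_simplex" "1 - y$k < b" for y
    using drift[OF that] mult_nonneg_nonneg[OF \<open>0 \<le> c\<close>, of "1 - y$k"] open_simplex_nth_le_1[OF that(1), of k]
    by linarith
  then show ?thesis
    unfolding bounded_superharmonic_def
    using C2_with_lyap lyap_bounds[OF assms(1,2)] rep_gen_lyap_nonpos[OF assms(2)] by blast
qed

section \<open>Continuous paths sampled on dyadic grids\<close>

definition dyadic_up :: "nat \<Rightarrow> real \<Rightarrow> nat" where
  "dyadic_up l t = nat \<lceil>t * 2^l\<rceil>"

lemma dyadic_up_bounds:
  assumes "t \<ge> 0"
  shows "t \<le> real (dyadic_up l t) / 2^l" "real (dyadic_up l t) / 2^l < t + 1 / 2^l"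
proof -
  have "t * 2^l \<le> real (dyadic_up l t)" "real (dyadic_up l t) < t * 2^l + 1"
    using assms by (auto simp: dyadic_up_def) linarith+
  then show "t \<le> real (dyadic_up l t) / 2^l" "real (dyadic_up l t) / 2^l < t + 1 / 2^l"
    by (simp_all add: field_simps)
qed

lemma dyadic_up_mono: "s \<le> t \<Longrightarrow> dyadic_up l s \<le> dyadic_up l t"
  unfolding dyadic_up_def by (intro nat_mono ceiling_mono mult_right_mono) auto

lemma tendsto_dyadic_up:
  assumes "t \<ge> 0"
  shows "(\<lambda>l. real (dyadic_up l t) / 2^l) \<longlonglongrightarrow> t"
proof (rule real_tendsto_sandwich[where f = "\<lambda>_. t" and h = "\<lambda>l. t + 1 / 2^l"])
  show "\<forall>\<^sub>F l in sequentially. t \<le> real (dyadic_up l t) / 2^l"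
    "\<forall>\<^sub>F l in sequentially. real (dyadic_up l t) / 2^l \<le> t + 1 / 2^l"
    using dyadic_up_bounds[OF assms] by (auto intro!: always_eventually less_imp_le)
  show "(\<lambda>l. t + 1 / 2^l) \<longlonglongrightarrow> t"
    using tendsto_add[OF tendsto_const LIMSEQ_divide_realpow_zero[of 2 1]] by simp
qed simp

lemma eventually_dyadic_up_le: "\<forall>\<^sub>F l in sequentially. dyadic_up l t \<le> l * 2^l"
proof (rule eventually_sequentiallyI)
  fix l assume "nat \<lceil>t\<rceil> \<le> l"
  then have "t \<le> real l"
    by linarith
  then have "t * 2^l \<le> real (l * 2^l)"
    by simp
  then show "dyadic_up l t \<le> l * 2^l"
    unfolding dyadic_up_def by (simp add: nat_le_iff ceiling_le_iff)
qed

lemma eventually_path_dyadic_up: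
  fixes p :: "real \<Rightarrow> 'a::topological_space"
  assumes "continuous_on {0..} p" "t \<ge> 0" "open S" "p t \<in> S"
  shows "\<forall>\<^sub>F l in sequentially. p (real (dyadic_up l t) / 2^l) \<in> S"
proof -
  have "(\<lambda>l. p (real (dyadic_up l t) / 2^l)) \<longlonglongrightarrow> p t"
    using assms(1,2) tendsto_dyadic_up[OF assms(2)] dyadic_up_bounds(1)[OF assms(2)]
    unfolding continuous_on_sequentially by (auto simp: comp_def intro: order_trans)
  then show ?thesis
    using assms(3,4) by (rule topological_tendstoD)
qed

lemma tendsto_if_dyadic:
  fixes p :: "real \<Rightarrow> 'a::metric_space"
  assumes cont: "continuous_on {0..} p"
    and dyadic: "\<And>m::nat. \<exists>N::nat. \<forall>i l. real N \<le> real i / 2^l \<longrightarrow> dist (p (real i / 2^l)) z \<le> inverse (real (Suc m))"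
  shows "(p \<longlongrightarrow> z) at_top"
  unfolding tendsto_iff
proof (intro allI impI)
  fix e :: real assume "e > 0"
  then obtain m where m: "inverse (real (Suc m)) < e"
    using reals_Archimedean by blast
  obtain N :: nat where N: "\<And>i l. real N \<le> real i / 2^l \<Longrightarrow> dist (p (real i / 2^l)) z \<le> inverse (real (Suc m))"
    using dyadic by blast
  have "dist (p t) z \<le> inverse (real (Suc m))" if t: "t \<ge> real N" for t
  proof (rule ccontr)
    assume "\<not> ?thesis"
    then have "\<forall>\<^sub>F l in sequentially. p (real (dyadic_up l t) / 2^l) \<in> {y. inverse (real (Suc m)) < dist y z}"
      using t by (intro eventually_path_dyadic_up[OF cont] open_Collect_less continuous_intros) auto
    then obtain l where "inverse (real (Suc m)) < dist (p (real (dyadic_up l t) / 2^l)) z"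
      using eventually_sequentially by auto
    moreover have "real N \<le> real (dyadic_up l t) / 2^l"
      using t dyadic_up_bounds(1)[of t l] by linarith
    ultimately show False
      using N[of "dyadic_up l t" l] by linarith
  qed
  then show "\<forall>\<^sub>F t in at_top. dist (p t) z < e"
    unfolding eventually_at_top_linorder using m by (meson le_less_trans)
qed

lemma continuous_path_tendsto_iff_dyadic:
  fixes p :: "real \<Rightarrow> 'a::metric_space"
  assumes "continuous_on {0..} p"
  shows "(p \<longlongrightarrow> z) at_top \<longleftrightarrow>
    (\<forall>m::nat. \<exists>N::nat. \<forall>i l. real N \<le> real i / 2^l \<longrightarrow> dist (p (real i / 2^l)) z \<le> inverse (real (Suc m)))"
proof (intro iffI allI)
  fix m :: nat
  assume "(p \<longlongrightarrow> z) at_top"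
  then have "\<forall>\<^sub>F t in at_top. dist (p t) z < inverse (real (Suc m))"
    by (simp add: tendsto_iff)
  then obtain T where "\<And>t. t \<ge> T \<Longrightarrow> dist (p t) z < inverse (real (Suc m))"
    by (auto simp: eventually_at_top_linorder)
  then show "\<exists>N::nat. \<forall>i l. real N \<le> real i / 2^l \<longrightarrow> dist (p (real i / 2^l)) z \<le> inverse (real (Suc m))"
    by (intro exI[of _ "nat \<lceil>T\<rceil>"]) (meson less_imp_le order_trans real_nat_ceiling_ge)
qed (use tendsto_if_dyadic[OF assms] in blast)

lemma dyadic_margin_if_in_open:
  fixes p :: "real \<Rightarrow> 'a::metric_space"
  assumes cont: "continuous_on {0..} p" and U: "open U" "U \<noteq> UNIV" and inside: "\<forall>t\<ge>0. p t \<in> U"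
  shows "\<exists>m::nat. \<forall>i l. real i / 2^l \<le> real N \<longrightarrow> inverse (real (Suc m)) \<le> infdist (p (real i / 2^l)) (- U)"
proof -
  have "continuous_on {0..real N} (\<lambda>t. infdist (p t) (- U))"
    by (intro continuous_on_infdist continuous_on_subset[OF cont]) auto
  from continuous_attains_inf[OF compact_Icc _ this]
  obtain t0 where t0: "t0 \<in> {0..real N}"
    and min: "\<And>t. t \<in> {0..real N} \<Longrightarrow> infdist (p t0) (- U) \<le> infdist (p t) (- U)"
    by auto
  have "infdist (p t0) (- U) > 0"
    using infdist_pos_not_in_closed[of "- U" "p t0"] U inside t0 by auto
  then obtain m where "inverse (real (Suc m)) < infdist (p t0) (- U)"
    using reals_Archimedean by blast
  then show ?thesis
    using min by (intro exI[of _ m] allI impI) (simp add: order.trans[OF less_imp_le])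
qed

lemma in_open_if_dyadic_margin:
  fixes p :: "real \<Rightarrow> 'a::metric_space"
  assumes cont: "continuous_on {0..} p" and "t \<ge> 0"
    and margin: "\<And>N::nat. \<exists>m::nat. \<forall>i l. real i / 2^l \<le> real N \<longrightarrow>
      inverse (real (Suc m)) \<le> infdist (p (real i / 2^l)) (- U)"
  shows "p t \<in> U"
proof (rule ccontr)
  obtain m where m: "\<And>i l. real i / 2^l \<le> real (nat \<lceil>t\<rceil> + 1) \<Longrightarrow>
      inverse (real (Suc m)) \<le> infdist (p (real i / 2^l)) (- U)"
    using margin by blast
  assume "p t \<notin> U"
  then have "\<forall>\<^sub>F l in sequentially. p (real (dyadic_up l t) / 2^l) \<in> {y. infdist y (- U) < inverse (real (Suc m))}"
    using \<open>t \<ge> 0\<close> by (intro eventually_path_dyadic_up[OF cont] open_Collect_less continuous_intros) auto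
  moreover have "\<forall>\<^sub>F l in sequentially. real (dyadic_up l t) / 2^l < t + 1"
    using order_tendstoD(2)[OF tendsto_dyadic_up[OF \<open>t \<ge> 0\<close>], of "t + 1"] by simp
  ultimately have "\<forall>\<^sub>F l in sequentially. infdist (p (real (dyadic_up l t) / 2^l)) (- U) < inverse (real (Suc m))
      \<and> real (dyadic_up l t) / 2^l < t + 1"
    by eventually_elim simp
  then obtain l where "infdist (p (real (dyadic_up l t) / 2^l)) (- U) < inverse (real (Suc m))"
    and "real (dyadic_up l t) / 2^l < t + 1"
    by (auto simp: eventually_sequentially)
  moreover have "t + 1 \<le> real (nat \<lceil>t\<rceil> + 1)"
    by linarith
  ultimately show False
    using m by (meson less_imp_le not_le order_trans)
qed

lemma continuous_path_in_open_iff_dyadic: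
  fixes p :: "real \<Rightarrow> 'a::metric_space"
  assumes "continuous_on {0..} p" "open U" "U \<noteq> UNIV"
  shows "(\<forall>t\<ge>0. p t \<in> U) \<longleftrightarrow>
    (\<forall>N::nat. \<exists>m::nat. \<forall>i l. real i / 2^l \<le> real N \<longrightarrow> inverse (real (Suc m)) \<le> infdist (p (real i / 2^l)) (- U))"
  using dyadic_margin_if_in_open[OF assms] in_open_if_dyadic_margin[OF assms(1)] by blast

lemma dyadic_exceed_Suc:
  assumes "\<exists>i\<le>l * 2^l. P (real i / 2^l)"
  shows "\<exists>i\<le>Suc l * 2 ^ Suc l. P (real i / 2 ^ Suc l)"
proof -
  obtain i where "i \<le> l * 2^l" "P (real i / 2^l)"
    using assms by blast
  moreover have "real (2 * i) / 2 ^ Suc l = real i / 2^l"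
    by simp
  ultimately show ?thesis
    by (intro exI[of _ "2 * i"]) auto
qed

lemma dyadic_rise_Suc:
  assumes "\<exists>j\<le>l * 2^l. P (real j / 2^l) \<and> (\<exists>i\<in>{j..l * 2^l}. Q (real i / 2^l))"
  shows "\<exists>j\<le>Suc l * 2 ^ Suc l. P (real j / 2 ^ Suc l) \<and> (\<exists>i\<in>{j..Suc l * 2 ^ Suc l}. Q (real i / 2 ^ Suc l))"
proof -
  obtain i j where "j \<le> i" "i \<le> l * 2^l" "P (real j / 2^l)" "Q (real i / 2^l)"
    using assms by auto
  moreover have "real (2 * n) / 2 ^ Suc l = real n / 2^l" for n
    by simp
  ultimately show ?thesis
    by (intro exI[of _ "2 * j"] conjI bexI[of _ "2 * i"]) auto
qed

lemma continuous_path_exceeds_on_grid: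
  fixes p :: "real \<Rightarrow> real"
  assumes "continuous_on {0..} p" "0 \<le> t" "c < p t"
  shows "\<exists>l. \<exists>i\<le>l * 2^l. c \<le> p (real i / 2^l)"
proof -
  have "\<forall>\<^sub>F l in sequentially. p (real (dyadic_up l t) / 2^l) \<in> {c<..}"
    using assms by (intro eventually_path_dyadic_up) auto
  then have "\<forall>\<^sub>F l in sequentially. c < p (real (dyadic_up l t) / 2^l) \<and> dyadic_up l t \<le> l * 2^l"
    using eventually_dyadic_up_le by eventually_elim auto
  then show ?thesis
    by (auto simp: eventually_sequentially intro: less_imp_le)
qed

lemma continuous_path_rises_on_grid:
  fixes p :: "real \<Rightarrow> real"
  assumes "continuous_on {0..} p" "0 \<le> r" "r \<le> t" "p r < b" "c < p t"
  shows "\<exists>l. \<exists>j\<le>l * 2^l. p (real j / 2^l) < b \<and> (\<exists>i\<in>{j..l * 2^l}. c \<le> p (real i / 2^l))"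
proof -
  have "\<forall>\<^sub>F l in sequentially. p (real (dyadic_up l r) / 2^l) \<in> {..<b}"
    using assms by (intro eventually_path_dyadic_up) auto
  moreover have "\<forall>\<^sub>F l in sequentially. p (real (dyadic_up l t) / 2^l) \<in> {c<..}"
    using assms by (intro eventually_path_dyadic_up) auto
  ultimately have "\<forall>\<^sub>F l in sequentially. p (real (dyadic_up l r) / 2^l) < b \<and>
      c < p (real (dyadic_up l t) / 2^l) \<and> dyadic_up l t \<le> l * 2^l"
    using eventually_dyadic_up_le by eventually_elim auto
  then obtain l where "p (real (dyadic_up l r) / 2^l) < b" "c < p (real (dyadic_up l t) / 2^l)"
    "dyadic_up l t \<le> l * 2^l"
    by (auto simp: eventually_sequentially)
  then show ?thesis
    using dyadic_up_mono[OF \<open>r \<le> t\<close>, of l]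
    by (intro exI[of _ l] exI[of _ "dyadic_up l r"] conjI bexI[of _ "dyadic_up l t"]) auto
qed

lemma tendsto_zero_if_eventually_le_inverse:
  fixes f :: "'a \<Rightarrow> real"
  assumes "\<And>m. \<forall>\<^sub>F t in F. f t \<le> inverse (real (Suc m))" "\<forall>\<^sub>F t in F. 0 \<le> f t"
  shows "(f \<longlongrightarrow> 0) F"
proof (rule order_tendstoI)
  fix e :: real assume "0 < e"
  then obtain m where m: "inverse (real (Suc m)) < e"
    using reals_Archimedean by blast
  show "\<forall>\<^sub>F t in F. f t < e"
    using assms(1)[of m] by eventually_elim (use m in linarith)
qed (use assms(2) in \<open>auto elim: eventually_mono\<close>)

section \<open>Maximal inequalities for discrete nonnegative supermartingales\<close>

definition nonneg_supermartingale :: "'a measure \<Rightarrow> (nat \<Rightarrow> 'a set set) \<Rightarrow> (nat \<Rightarrow> 'a \<Rightarrow> real) \<Rightarrow> bool" where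
  "nonneg_supermartingale M G Z \<longleftrightarrow> (\<forall>i. sigma_algebra (space M) (G i) \<and> G i \<subseteq> sets M \<and> G i \<subseteq> G (Suc i) \<and>
     (\<forall>c. {\<omega>\<in>space M. Z i \<omega> < c} \<in> G i) \<and> (\<forall>\<omega>\<in>space M. 0 \<le> Z i \<omega>) \<and> integrable M (Z i) \<and>
     (\<forall>E\<in>G i. (\<integral>\<omega>. indicator E \<omega> * Z (Suc i) \<omega> \<partial>M) \<le> (\<integral>\<omega>. indicator E \<omega> * Z i \<omega> \<partial>M)))"

lemma ex_le_Suc_iff: "(\<exists>i\<le>Suc n. P i) \<longleftrightarrow> P 0 \<or> (\<exists>i\<le>n. P (Suc i))"
  using Ex_less_Suc2[of "Suc n" P] by (simp add: less_Suc_eq_le)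

lemma nonneg_supermartingale_shift:
  "nonneg_supermartingale M G Z \<Longrightarrow> nonneg_supermartingale M (\<lambda>i. G (Suc i)) (\<lambda>i. Z (Suc i))"
  unfolding nonneg_supermartingale_def by blast

lemma nonneg_supermartingaleD:
  assumes "nonneg_supermartingale M G Z"
  shows "G i \<subseteq> sets M" "G i \<subseteq> G (Suc i)" "\<omega> \<in> space M \<Longrightarrow> 0 \<le> Z i \<omega>" "integrable M (Z i)"
    "E \<in> G i \<Longrightarrow> (\<integral>\<omega>. indicator E \<omega> * Z (Suc i) \<omega> \<partial>M) \<le> (\<integral>\<omega>. indicator E \<omega> * Z i \<omega> \<partial>M)"
  using assms unfolding nonneg_supermartingale_def by blast+

lemma nonneg_supermartingale_level_sets:
  assumes "nonneg_supermartingale M G Z" "E \<in> G i"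
  shows "{\<omega>\<in>E. Z i \<omega> < c} \<in> G i" "{\<omega>\<in>E. c \<le> Z i \<omega>} \<in> G i"
proof -
  interpret G: sigma_algebra "space M" "G i"
    using assms(1) unfolding nonneg_supermartingale_def by blast
  have less: "{\<omega>\<in>space M. Z i \<omega> < c} \<in> G i"
    using assms(1) unfolding nonneg_supermartingale_def by blast
  have "E \<subseteq> space M"
    using G.sets_into_space assms(2) by blast
  then have "{\<omega>\<in>E. Z i \<omega> < c} = E \<inter> {\<omega>\<in>space M. Z i \<omega> < c}"
    "{\<omega>\<in>E. c \<le> Z i \<omega>} = E - {\<omega>\<in>space M. Z i \<omega> < c}"
    by auto
  then show "{\<omega>\<in>E. Z i \<omega> < c} \<in> G i" "{\<omega>\<in>E. c \<le> Z i \<omega>} \<in> G i"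
    using assms(2) less by auto
qed

context finite_measure
begin

lemma integral_indicator_mult_ge:
  fixes Z :: "'a \<Rightarrow> real"
  assumes "E \<in> sets M" "integrable M Z" "\<And>\<omega>. \<omega> \<in> E \<Longrightarrow> c \<le> Z \<omega>"
  shows "c * measure M E \<le> (\<integral>\<omega>. indicator E \<omega> * Z \<omega> \<partial>M)"
proof -
  have "c * measure M E = (\<integral>\<omega>. indicator E \<omega> * c \<partial>M)"
    using sets.Int_space_eq2[OF assms(1)] by (simp add: mult.commute)
  also have "\<dots> \<le> (\<integral>\<omega>. indicator E \<omega> * Z \<omega> \<partial>M)"
    using assms(3) integrable_real_mult_indicator[OF assms(1) integrable_const[of c]]
      integrable_real_mult_indicator[OF assms(1,2)]
    by (intro integral_mono) (auto simp: indicator_def mult.commute)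
  finally show ?thesis .
qed

lemma integral_indicator_mult_le:
  fixes Z :: "'a \<Rightarrow> real"
  assumes "E \<in> sets M" "integrable M Z" "\<And>\<omega>. \<omega> \<in> E \<Longrightarrow> Z \<omega> \<le> c"
  shows "(\<integral>\<omega>. indicator E \<omega> * Z \<omega> \<partial>M) \<le> c * measure M E"
proof -
  have "(\<integral>\<omega>. indicator E \<omega> * Z \<omega> \<partial>M) \<le> (\<integral>\<omega>. indicator E \<omega> * c \<partial>M)"
    using assms(3) integrable_real_mult_indicator[OF assms(1) integrable_const[of c]]
      integrable_real_mult_indicator[OF assms(1,2)]
    by (intro integral_mono) (auto simp: indicator_def mult.commute)
  also have "\<dots> = c * measure M E"
    using sets.Int_space_eq2[OF assms(1)] by (simp add: mult.commute)
  finally show ?thesis .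
qed

lemma integral_indicator_mult_Un:
  fixes Z :: "'a \<Rightarrow> real"
  assumes "E1 \<in> sets M" "E2 \<in> sets M" "E1 \<inter> E2 = {}" "integrable M Z"
  shows "(\<integral>\<omega>. indicator (E1 \<union> E2) \<omega> * Z \<omega> \<partial>M) =
    (\<integral>\<omega>. indicator E1 \<omega> * Z \<omega> \<partial>M) + (\<integral>\<omega>. indicator E2 \<omega> * Z \<omega> \<partial>M)"
proof -
  have "(\<lambda>\<omega>. indicator (E1 \<union> E2) \<omega> * Z \<omega>) = (\<lambda>\<omega>. indicator E1 \<omega> * Z \<omega> + indicator E2 \<omega> * Z \<omega>)"
    using assms(3) by (auto simp: indicator_def fun_eq_iff)
  then show ?thesis
    using integrable_real_mult_indicator[OF assms(1,4)] integrable_real_mult_indicator[OF assms(2,4)]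
    by (simp add: Bochner_Integration.integral_add mult.commute)
qed

lemma measure_le_sum_of_cover:
  assumes "A \<subseteq> B \<union> C" "B \<in> sets M" "C \<in> sets M"
  shows "measure M A \<le> measure M B + measure M C"
  using finite_measure_mono[OF assms(1)] measure_Un_le[OF assms(2,3)] assms(2,3) by fastforce

lemma measure_UN_incseq_le:
  assumes "range D \<subseteq> sets M" "incseq D" "\<And>l. measure M (D l) \<le> B"
  shows "measure M (\<Union>l. D l) \<le> B"
  using finite_Lim_measure_incseq[OF assms(1,2)] assms(3) by (intro LIMSEQ_le_const2) auto

lemma measure_UN_le_halving:
  assumes "range B \<subseteq> sets M" "\<And>m. measure M (B m) \<le> e / 2 ^ Suc m"
  shows "measure M (\<Union>m. B m) \<le> e"
proof -
  have "(\<lambda>m. e * (1/2) ^ Suc m) sums (e * 1)"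
    by (intro sums_mult power_half_series)
  then have sums: "(\<lambda>m. e / 2 ^ Suc m) sums e"
    by (simp add: power_one_over)
  have summable: "summable (\<lambda>m. measure M (B m))"
    by (rule summable_comparison_test'[OF sums_summable[OF sums], of 0]) (use assms(2) in simp)
  have "measure M (\<Union>m. B m) \<le> (\<Sum>m. measure M (B m))"
    by (rule finite_measure_subadditive_countably[OF assms(1) summable])
  also have "\<dots> \<le> (\<Sum>m. e / 2 ^ Suc m)"
    by (rule suminf_le[OF assms(2) summable sums_summable[OF sums]])
  also have "\<dots> = e"
    by (rule sums_unique[OF sums, symmetric])
  finally show ?thesis .
qed

text \<open>Induction step of Doob's maximal inequality: split \<open>E\<close> according to whether \<open>Z\<^sub>0\<close> has
  already reached \<open>c\<close>; on the rest, one supermartingale step passes to the shifted process.\<close>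

lemma nonneg_supermartingale_maximal_step:
  assumes Z: "nonneg_supermartingale M G Z" and "c > 0" "E \<in> G 0"
    and shifted: "\<And>E'. E' \<in> G (Suc 0) \<Longrightarrow>
      c * measure M {\<omega>\<in>E'. \<exists>i\<le>N. c \<le> Z (Suc i) \<omega>} \<le> (\<integral>\<omega>. indicator E' \<omega> * Z (Suc 0) \<omega> \<partial>M)"
  shows "c * measure M {\<omega>\<in>E. \<exists>i\<le>Suc N. c \<le> Z i \<omega>} \<le> (\<integral>\<omega>. indicator E \<omega> * Z 0 \<omega> \<partial>M)"
proof -
  define E1 E2 where "E1 = {\<omega>\<in>E. c \<le> Z 0 \<omega>}" and "E2 = {\<omega>\<in>E. Z 0 \<omega> < c}"
  have E1: "E1 \<in> G 0" and E2: "E2 \<in> G 0"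
    unfolding E1_def E2_def using nonneg_supermartingale_level_sets[OF Z \<open>E \<in> G 0\<close>] by blast+
  then have E1_sets: "E1 \<in> sets M" and E2_sets: "E2 \<in> sets M"
    using nonneg_supermartingaleD(1)[OF Z] by blast+
  define S2 where "S2 = {\<omega>\<in>E2. \<exists>i\<le>N. c \<le> Z (Suc i) \<omega>}"
  have S2: "c * measure M S2 \<le> (\<integral>\<omega>. indicator E2 \<omega> * Z 0 \<omega> \<partial>M)"
    using shifted[of E2] E2 nonneg_supermartingaleD(2,5)[OF Z] unfolding S2_def by fastforce
  have [measurable]: "Z i \<in> borel_measurable M" for i
    using nonneg_supermartingaleD(4)[OF Z] by blast
  have "S2 \<in> sets M"
    unfolding S2_def using E2_sets by measurable
  moreover have "{\<omega>\<in>E. \<exists>i\<le>Suc N. c \<le> Z i \<omega>} \<subseteq> E1 \<union> S2"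
    unfolding E1_def E2_def S2_def ex_le_Suc_iff by auto
  ultimately have "c * measure M {\<omega>\<in>E. \<exists>i\<le>Suc N. c \<le> Z i \<omega>} \<le> c * measure M E1 + c * measure M S2"
    using measure_le_sum_of_cover[OF _ E1_sets] \<open>c > 0\<close> by (simp add: distrib_left[symmetric])
  also have "\<dots> \<le> (\<integral>\<omega>. indicator E1 \<omega> * Z 0 \<omega> \<partial>M) + (\<integral>\<omega>. indicator E2 \<omega> * Z 0 \<omega> \<partial>M)"
    using integral_indicator_mult_ge[OF E1_sets nonneg_supermartingaleD(4)[OF Z], of c] S2
    unfolding E1_def by fastforce
  also have "\<dots> = (\<integral>\<omega>. indicator (E1 \<union> E2) \<omega> * Z 0 \<omega> \<partial>M)"
    by (rule integral_indicator_mult_Un[symmetric, OF E1_sets E2_sets _ nonneg_supermartingaleD(4)[OF Z]])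
      (auto simp: E1_def E2_def)
  also have "E1 \<union> E2 = E"
    by (auto simp: E1_def E2_def)
  finally show ?thesis .
qed

lemma nonneg_supermartingale_maximal_ineq:
  assumes "nonneg_supermartingale M G Z" "c > 0" "E \<in> G 0"
  shows "c * measure M {\<omega>\<in>E. \<exists>i\<le>N. c \<le> Z i \<omega>} \<le> (\<integral>\<omega>. indicator E \<omega> * Z 0 \<omega> \<partial>M)"
  using assms
proof (induction N arbitrary: G Z E)
  case 0
  have E: "E \<in> sets M" and int: "integrable M (Z 0)"
    using nonneg_supermartingaleD[OF "0.prems"(1)] "0.prems"(3) by blast+
  have high: "{\<omega>\<in>E. c \<le> Z 0 \<omega>} \<in> sets M"
    using nonneg_supermartingale_level_sets(2)[OF "0.prems"(1,3)] nonneg_supermartingaleD(1)[OF "0.prems"(1)]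
    by blast
  have "c * measure M {\<omega>\<in>E. \<exists>i\<le>0. c \<le> Z i \<omega>} \<le> (\<integral>\<omega>. indicator {\<omega>\<in>E. c \<le> Z 0 \<omega>} \<omega> * Z 0 \<omega> \<partial>M)"
    using integral_indicator_mult_ge[OF high int] by simp
  also have "\<dots> \<le> (\<integral>\<omega>. indicator E \<omega> * Z 0 \<omega> \<partial>M)"
    using nonneg_supermartingaleD(3)[OF "0.prems"(1)] sets.sets_into_space[OF E]
      integrable_real_mult_indicator[OF high int] integrable_real_mult_indicator[OF E int]
    by (intro integral_mono) (auto simp: indicator_def mult.commute subset_iff)
  finally show ?case .
next
  case (Suc N)
  show ?case
    using Suc.IH[OF nonneg_supermartingale_shift[OF Suc.prems(1)] Suc.prems(2)]
    by (rule nonneg_supermartingale_maximal_step[OF Suc.prems])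
qed

lemma rise_event_Suc_subset:
  fixes Z :: "nat \<Rightarrow> 'a \<Rightarrow> real"
  shows "{\<omega>\<in>E. \<exists>j\<le>Suc N. Z j \<omega> < b \<and> (\<exists>i\<in>{j..Suc N}. c \<le> Z i \<omega>)} \<subseteq>
     {\<omega>\<in>{\<omega>\<in>E. Z 0 \<omega> < b}. \<exists>i\<le>Suc N. c \<le> Z i \<omega>} \<union>
     {\<omega>\<in>{\<omega>\<in>E. b \<le> Z 0 \<omega>}. \<exists>j\<le>N. Z (Suc j) \<omega> < b \<and> (\<exists>i\<in>{j..N}. c \<le> Z (Suc i) \<omega>)}"
proof (rule subsetI)
  fix \<omega> assume "\<omega> \<in> {\<omega>\<in>E. \<exists>j\<le>Suc N. Z j \<omega> < b \<and> (\<exists>i\<in>{j..Suc N}. c \<le> Z i \<omega>)}"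
  then obtain j i where \<omega>: "\<omega> \<in> E" "j \<le> Suc N" "Z j \<omega> < b" "i \<in> {j..Suc N}" "c \<le> Z i \<omega>"
    by blast
  show "\<omega> \<in> {\<omega>\<in>{\<omega>\<in>E. Z 0 \<omega> < b}. \<exists>i\<le>Suc N. c \<le> Z i \<omega>} \<union>
     {\<omega>\<in>{\<omega>\<in>E. b \<le> Z 0 \<omega>}. \<exists>j\<le>N. Z (Suc j) \<omega> < b \<and> (\<exists>i\<in>{j..N}. c \<le> Z (Suc i) \<omega>)}"
  proof (cases "Z 0 \<omega> < b")
    case False
    then obtain j' where "j = Suc j'"
      using \<omega>(3) by (cases j) auto
    moreover obtain i' where "i = Suc i'"
      using \<omega>(4) \<open>j = Suc j'\<close> by (cases i) auto
    ultimately show ?thesis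
      using False \<omega> by (auto simp: not_less intro!: exI[of _ j'] bexI[of _ i'])
  qed (use \<omega> in auto)
qed

text \<open>On \<open>{Z\<^sub>0 < b}\<close> this is the maximal inequality, as \<open>Z\<^sub>0\<close> integrates to at most \<open>b\<close> times
  the measure there; on \<open>{b \<le> Z\<^sub>0}\<close> the rise starts later and the shifted process takes over.\<close>

lemma nonneg_supermartingale_rise_step:
  assumes Z: "nonneg_supermartingale M G Z" and "0 < b" "b \<le> c" "E \<in> G 0"
    and shifted: "\<And>E'. E' \<in> G (Suc 0) \<Longrightarrow>
      c * measure M {\<omega>\<in>E'. \<exists>j\<le>N. Z (Suc j) \<omega> < b \<and> (\<exists>i\<in>{j..N}. c \<le> Z (Suc i) \<omega>)} \<le> b * measure M E'"
  shows "c * measure M {\<omega>\<in>E. \<exists>j\<le>Suc N. Z j \<omega> < b \<and> (\<exists>i\<in>{j..Suc N}. c \<le> Z i \<omega>)} \<le> b * measure M E"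
proof -
  have "c > 0"
    using assms(2,3) by linarith
  define E1 E2 where "E1 = {\<omega>\<in>E. Z 0 \<omega> < b}" and "E2 = {\<omega>\<in>E. b \<le> Z 0 \<omega>}"
  have E1: "E1 \<in> G 0" and E2: "E2 \<in> G 0"
    unfolding E1_def E2_def using nonneg_supermartingale_level_sets[OF Z \<open>E \<in> G 0\<close>] by blast+
  then have E1_sets: "E1 \<in> sets M" and E2_sets: "E2 \<in> sets M"
    using nonneg_supermartingaleD(1)[OF Z] by blast+
  have E_split: "E = E1 \<union> E2" "E1 \<inter> E2 = {}"
    by (auto simp: E1_def E2_def)
  define S1 where "S1 = {\<omega>\<in>E1. \<exists>i\<le>Suc N. c \<le> Z i \<omega>}"
  define S2 where "S2 = {\<omega>\<in>E2. \<exists>j\<le>N. Z (Suc j) \<omega> < b \<and> (\<exists>i\<in>{j..N}. c \<le> Z (Suc i) \<omega>)}"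
  have "c * measure M S1 \<le> (\<integral>\<omega>. indicator E1 \<omega> * Z 0 \<omega> \<partial>M)"
    unfolding S1_def by (rule nonneg_supermartingale_maximal_ineq[OF Z \<open>c > 0\<close> E1])
  also have "\<dots> \<le> b * measure M E1"
    using nonneg_supermartingaleD(4)[OF Z]
    by (intro integral_indicator_mult_le[OF E1_sets]) (auto simp: E1_def less_imp_le)
  finally have S1: "c * measure M S1 \<le> b * measure M E1" .
  have S2: "c * measure M S2 \<le> b * measure M E2"
    unfolding S2_def using E2 nonneg_supermartingaleD(2)[OF Z] by (intro shifted) blast
  have [measurable]: "Z i \<in> borel_measurable M" for i
    using nonneg_supermartingaleD(4)[OF Z] by blast
  have "S1 \<in> sets M" "S2 \<in> sets M"
    unfolding S1_def S2_def using E1_sets E2_sets by measurable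
  moreover have "{\<omega>\<in>E. \<exists>j\<le>Suc N. Z j \<omega> < b \<and> (\<exists>i\<in>{j..Suc N}. c \<le> Z i \<omega>)} \<subseteq> S1 \<union> S2"
    unfolding S1_def S2_def E1_def E2_def by (rule rise_event_Suc_subset)
  ultimately have "c * measure M {\<omega>\<in>E. \<exists>j\<le>Suc N. Z j \<omega> < b \<and> (\<exists>i\<in>{j..Suc N}. c \<le> Z i \<omega>)}
      \<le> c * measure M S1 + c * measure M S2"
    using measure_le_sum_of_cover \<open>c > 0\<close> by (simp add: distrib_left[symmetric])
  also have "\<dots> \<le> b * (measure M E1 + measure M E2)"
    using S1 S2 by (simp add: distrib_left)
  also have "\<dots> = b * measure M E"
    using finite_measure_Union[OF E1_sets E2_sets E_split(2)] E_split(1) by simp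
  finally show ?thesis .
qed

lemma nonneg_supermartingale_rise_ineq:
  assumes "nonneg_supermartingale M G Z" "0 < b" "b \<le> c" "E \<in> G 0"
  shows "c * measure M {\<omega>\<in>E. \<exists>j\<le>N. Z j \<omega> < b \<and> (\<exists>i\<in>{j..N}. c \<le> Z i \<omega>)} \<le> b * measure M E"
  using assms
proof (induction N arbitrary: G Z E)
  case 0
  then have empty: "{\<omega>\<in>E. \<exists>j\<le>0. Z j \<omega> < b \<and> (\<exists>i\<in>{j..0}. c \<le> Z i \<omega>)} = {}"
    by auto
  show ?case
    using "0.prems"(2) by (simp only: empty measure_empty) simp
next
  case (Suc N)
  show ?case
    using Suc.IH[OF nonneg_supermartingale_shift[OF Suc.prems(1)] Suc.prems(2,3)]
    by (rule nonneg_supermartingale_rise_step[OF Suc.prems])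
qed

end

section \<open>Weak solutions of the replicator dynamics\<close>

locale replicator_process =
  fixes A :: "real^'n^'n" and \<sigma> :: "real^'n" and x :: "real^'n" and M :: "'w measure"
    and X :: "real \<Rightarrow> 'w \<Rightarrow> real^'n"
  assumes solution: "replicator_solution A \<sigma> x M X"
begin

sublocale prob_space M
  using solution by (simp add: replicator_solution_def)

abbreviation F :: "real \<Rightarrow> 'w set set" where
  "F \<equiv> nat_filtration M X"

lemma X_measurable: "t \<ge> 0 \<Longrightarrow> X t \<in> borel_measurable M"
  and X_0: "\<omega> \<in> space M \<Longrightarrow> X 0 \<omega> = x"
  and X_continuous: "\<omega> \<in> space M \<Longrightarrow> continuous_on {0..} (\<lambda>t. X t \<omega>)"
  and X_open_simplex: "\<omega> \<in> space M \<Longrightarrow> t \<ge> 0 \<Longrightarrow> X t \<omega> \<in> open_simplex"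
  and martingale: "C2_with f g H \<Longrightarrow> is_martingale M F
          (\<lambda>t \<omega>. f (X t \<omega>) - f x - integral {0..t} (\<lambda>r. rep_gen A \<sigma> g H (X r \<omega>)))"
  using solution by (simp_all add: replicator_solution_def)

lemma x_open_simplex: "x \<in> open_simplex"
  using X_open_simplex[of _ 0] X_0 not_empty by fastforce

lemma F_subset_sets: "F s \<subseteq> sets M"
  unfolding nat_filtration_def using X_measurable
  by (intro sets.sigma_sets_subset) (auto simp: measurable_def)

lemma sigma_algebra_F: "sigma_algebra (space M) (F s)"
  unfolding nat_filtration_def by (rule sigma_algebra_sigma_sets) auto

lemma F_mono: "s \<le> t \<Longrightarrow> F s \<subseteq> F t"
  unfolding nat_filtration_def by (intro sigma_sets_mono' UN_mono) auto

lemma space_in_F: "space M \<in> F s"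
  unfolding nat_filtration_def by (rule sigma_sets_top)

lemma level_set_in_F:
  fixes f :: "real^'n \<Rightarrow> real"
  assumes "continuous_on UNIV f" "0 \<le> s"
  shows "{\<omega>\<in>space M. f (X s \<omega>) < c} \<in> F s"
proof -
  have "open {y. f y < c}"
    using open_vimage[OF open_lessThan assms(1), of c] by (simp add: vimage_def)
  then have "X s -` {y. f y < c} \<inter> space M \<in> F s"
    unfolding nat_filtration_def using assms(2)
    by (intro sigma_sets.Basic UN_I[of s]) (auto intro!: exI[of _ "{y. f y < c}"])
  moreover have "X s -` {y. f y < c} \<inter> space M = {\<omega>\<in>space M. f (X s \<omega>) < c}"
    by auto
  ultimately show ?thesis
    by simp
qed

lemma borel_measurable_comp_X:
  "continuous_on UNIV f \<Longrightarrow> t \<ge> 0 \<Longrightarrow> (\<lambda>\<omega>. f (X t \<omega>)) \<in> borel_measurable M"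
  by (rule borel_measurable_continuous_on[OF _ X_measurable])

lemma integrable_comp_X:
  fixes f :: "real^'n \<Rightarrow> real"
  assumes "continuous_on UNIV f" "t \<ge> 0" "\<And>y. y \<in> open_simplex \<Longrightarrow> \<bar>f y\<bar> \<le> B"
  shows "integrable M (\<lambda>\<omega>. f (X t \<omega>))"
  using assms X_open_simplex borel_measurable_comp_X by (intro integrable_const_bound[where B = B]) auto

lemma integrable_on_path:
  fixes L :: "real^'n \<Rightarrow> real"
  assumes "continuous_on UNIV L" "\<omega> \<in> space M"
  shows "(\<lambda>s. L (X s \<omega>)) integrable_on {0..t}"
  by (rule integrable_continuous_interval, rule continuous_on_compose2[OF assms(1)],
      rule continuous_on_subset[OF X_continuous[OF assms(2)]]) auto

lemma path_integral_antimono: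
  fixes L :: "real^'n \<Rightarrow> real"
  assumes "continuous_on UNIV L" "\<And>y. y \<in> open_simplex \<Longrightarrow> L y \<le> 0"
    "\<omega> \<in> space M" "0 \<le> s" "s \<le> t"
  shows "integral {0..t} (\<lambda>r. L (X r \<omega>)) \<le> integral {0..s} (\<lambda>r. L (X r \<omega>))"
proof -
  have "integral {0..s} (\<lambda>r. L (X r \<omega>)) + integral {s..t} (\<lambda>r. L (X r \<omega>)) = integral {0..t} (\<lambda>r. L (X r \<omega>))"
    using assms integrable_on_path by (intro Henstock_Kurzweil_Integration.integral_combine) auto
  moreover have "integral {s..t} (\<lambda>r. L (X r \<omega>)) \<le> integral {s..t} (\<lambda>r. 0)"
    using assms X_open_simplex integrable_on_subinterval[OF integrable_on_path[OF assms(1,3), of t]]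
    by (intro integral_le) auto
  ultimately show ?thesis
    by simp
qed

definition dynkin_martingale ::
  "(real^'n \<Rightarrow> real) \<Rightarrow> (real^'n \<Rightarrow> real^'n) \<Rightarrow> (real^'n \<Rightarrow> real^'n^'n) \<Rightarrow> real \<Rightarrow> 'w \<Rightarrow> real"
where
  "dynkin_martingale f g H t \<omega> = f (X t \<omega>) - f x - integral {0..t} (\<lambda>r. rep_gen A \<sigma> g H (X r \<omega>))"

lemma dynkin_martingale:
  assumes "C2_with f g H"
  shows "t \<ge> 0 \<Longrightarrow> integrable M (dynkin_martingale f g H t)"
    and "0 \<le> s \<Longrightarrow> s \<le> t \<Longrightarrow> E \<in> F s \<Longrightarrow>
      (\<integral>\<omega>. indicator E \<omega> * dynkin_martingale f g H t \<omega> \<partial>M) =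
      (\<integral>\<omega>. indicator E \<omega> * dynkin_martingale f g H s \<omega> \<partial>M)"
  using martingale[OF assms] unfolding is_martingale_def dynkin_martingale_def[abs_def] by blast+

lemma dynkin_formula:
  assumes C2: "C2_with f g H" and bounded: "\<And>y. y \<in> open_simplex \<Longrightarrow> \<bar>f y\<bar> \<le> B" and "t \<ge> 0"
  shows "integrable M (\<lambda>\<omega>. integral {0..t} (\<lambda>r. rep_gen A \<sigma> g H (X r \<omega>)))"
    "(\<integral>\<omega>. integral {0..t} (\<lambda>r. rep_gen A \<sigma> g H (X r \<omega>)) \<partial>M) = (\<integral>\<omega>. f (X t \<omega>) \<partial>M) - f x"
proof -
  have fX: "integrable M (\<lambda>\<omega>. f (X t \<omega>))"
    using integrable_comp_X[OF C2_with_continuous_on(1)[OF C2] \<open>t \<ge> 0\<close> bounded] .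
  note Y = dynkin_martingale(1)[OF C2 \<open>t \<ge> 0\<close>]
  have eq: "(\<lambda>\<omega>. integral {0..t} (\<lambda>r. rep_gen A \<sigma> g H (X r \<omega>))) =
      (\<lambda>\<omega>. f (X t \<omega>) - f x - dynkin_martingale f g H t \<omega>)"
    by (simp add: dynkin_martingale_def)
  then show "integrable M (\<lambda>\<omega>. integral {0..t} (\<lambda>r. rep_gen A \<sigma> g H (X r \<omega>)))"
    using fX Y by simp
  have "(\<integral>\<omega>. indicator (space M) \<omega> * dynkin_martingale f g H t \<omega> \<partial>M) =
      (\<integral>\<omega>. indicator (space M) \<omega> * dynkin_martingale f g H 0 \<omega> \<partial>M)"
    using dynkin_martingale(2)[OF C2 order_refl \<open>t \<ge> 0\<close> space_in_F] .
  also have "\<dots> = 0"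
    by (simp add: dynkin_martingale_def X_0 cong: Bochner_Integration.integral_cong)
  finally have "(\<integral>\<omega>. dynkin_martingale f g H t \<omega> \<partial>M) = 0"
    by (simp cong: Bochner_Integration.integral_cong)
  then show "(\<integral>\<omega>. integral {0..t} (\<lambda>r. rep_gen A \<sigma> g H (X r \<omega>)) \<partial>M) = (\<integral>\<omega>. f (X t \<omega>) \<partial>M) - f x"
    unfolding eq using fX Y by (simp add: prob_space)
qed

text \<open>Since the generator is non-positive, \<open>f (X t) - f (X s)\<close> is bounded by the increment of the
  Dynkin martingale.\<close>

lemma bounded_superharmonic_supermartingale:
  assumes f: "bounded_superharmonic A \<sigma> f g H" and "0 \<le> s" "s \<le> t" "E \<in> F s"
  shows "(\<integral>\<omega>. indicator E \<omega> * f (X t \<omega>) \<partial>M) \<le> (\<integral>\<omega>. indicator E \<omega> * f (X s \<omega>) \<partial>M)"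
proof -
  note C2 = bounded_superharmonicD(1)[OF f]
  let ?Y = "dynkin_martingale f g H"
  have E: "E \<in> sets M"
    using assms(4) F_subset_sets by blast
  have int: "integrable M (\<lambda>\<omega>. indicator E \<omega> * ?Y u \<omega>)" "integrable M (\<lambda>\<omega>. indicator E \<omega> * f (X u \<omega>))"
    if "u \<ge> 0" for u
    using integrable_real_mult_indicator[OF E dynkin_martingale(1)[OF C2 that]]
      integrable_real_mult_indicator[OF E integrable_comp_X[OF bounded_superharmonicD(2)[OF f] that
        bounded_superharmonicD(6)[OF f]]]
    by (simp_all add: mult.commute)
  have "(\<integral>\<omega>. indicator E \<omega> * f (X t \<omega>) \<partial>M) \<le>
      (\<integral>\<omega>. indicator E \<omega> * ?Y t \<omega> - indicator E \<omega> * ?Y s \<omega> + indicator E \<omega> * f (X s \<omega>) \<partial>M)"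
  proof (rule integral_mono)
    fix \<omega> assume "\<omega> \<in> space M"
    then have "integral {0..t} (\<lambda>r. rep_gen A \<sigma> g H (X r \<omega>)) \<le> integral {0..s} (\<lambda>r. rep_gen A \<sigma> g H (X r \<omega>))"
      using path_integral_antimono[OF bounded_superharmonicD(3,7)[OF f]] assms(2,3) by blast
    then show "indicator E \<omega> * f (X t \<omega>) \<le> indicator E \<omega> * ?Y t \<omega> - indicator E \<omega> * ?Y s \<omega> + indicator E \<omega> * f (X s \<omega>)"
      by (auto simp: dynkin_martingale_def indicator_def)
  next
    show "integrable M (\<lambda>\<omega>. indicator E \<omega> * ?Y t \<omega> - indicator E \<omega> * ?Y s \<omega> + indicator E \<omega> * f (X s \<omega>))"
      using int assms(2,3) by (intro Bochner_Integration.integrable_add Bochner_Integration.integrable_diff) auto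
  qed (use int assms(2,3) in auto)
  also have "\<dots> = (\<integral>\<omega>. indicator E \<omega> * ?Y t \<omega> \<partial>M) - (\<integral>\<omega>. indicator E \<omega> * ?Y s \<omega> \<partial>M)
      + (\<integral>\<omega>. indicator E \<omega> * f (X s \<omega>) \<partial>M)"
    using int[of s] int[of t] assms(2,3)
    by (simp add: Bochner_Integration.integral_add Bochner_Integration.integral_diff
        Bochner_Integration.integrable_diff)
  also have "(\<integral>\<omega>. indicator E \<omega> * ?Y t \<omega> \<partial>M) = (\<integral>\<omega>. indicator E \<omega> * ?Y s \<omega> \<partial>M)"
    by (rule dynkin_martingale(2)[OF C2 assms(2-4)])
  finally show ?thesis
    by simp
qed

lemma nonneg_supermartingale_grid:
  assumes f: "bounded_superharmonic A \<sigma> f g H"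
  shows "nonneg_supermartingale M (\<lambda>i. F (real i / 2^l)) (\<lambda>i \<omega>. f (X (real i / 2^l) \<omega>))"
proof -
  show ?thesis
    unfolding nonneg_supermartingale_def
    using sigma_algebra_F F_subset_sets F_mono[of "real _ / 2^l" "real (Suc _) / 2^l"]
      level_set_in_F[OF bounded_superharmonicD(2)[OF f]] bounded_superharmonicD(4)[OF f] X_open_simplex
      integrable_comp_X[OF bounded_superharmonicD(2)[OF f] _ bounded_superharmonicD(6)[OF f]]
      bounded_superharmonic_supermartingale[OF f]
    by (simp add: divide_right_mono)
qed

lemma exceed_grid_bound:
  assumes f: "bounded_superharmonic A \<sigma> f g H" and "c > 0"
  shows "c * measure M {\<omega>\<in>space M. \<exists>i\<le>N. c \<le> f (X (real i / 2^l) \<omega>)} \<le> f x"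
proof -
  have "c * measure M {\<omega>\<in>space M. \<exists>i\<le>N. c \<le> f (X (real i / 2^l) \<omega>)}
      \<le> (\<integral>\<omega>. indicator (space M) \<omega> * f (X (real 0 / 2^l) \<omega>) \<partial>M)"
    by (rule nonneg_supermartingale_maximal_ineq[OF nonneg_supermartingale_grid[OF f] \<open>c > 0\<close> space_in_F])
  also have "\<dots> = f x"
    by (simp add: X_0 prob_space cong: Bochner_Integration.integral_cong)
  finally show ?thesis .
qed

lemma rise_grid_bound:
  assumes f: "bounded_superharmonic A \<sigma> f g H" and "0 < b" "b \<le> c"
  shows "c * measure M {\<omega>\<in>space M. \<exists>j\<le>N. f (X (real j / 2^l) \<omega>) < b \<and>
      (\<exists>i\<in>{j..N}. c \<le> f (X (real i / 2^l) \<omega>))} \<le> b"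
  using nonneg_supermartingale_rise_ineq[OF nonneg_supermartingale_grid[OF f] assms(2,3) space_in_F]
  by (simp add: prob_space)

lemma exceed_exceptional_set:
  assumes f: "bounded_superharmonic A \<sigma> f g H" and "c > 0"
  obtains B where "B \<in> sets M" "measure M B \<le> f x / c"
    "\<And>\<omega> t. \<omega> \<in> space M - B \<Longrightarrow> t \<ge> 0 \<Longrightarrow> f (X t \<omega>) \<le> c"
proof
  note f_cont = bounded_superharmonicD(2)[OF f]
  define D where "D l = {\<omega>\<in>space M. \<exists>i\<le>l * 2^l. c \<le> f (X (real i / 2^l) \<omega>)}" for l
  have [measurable]: "(\<lambda>\<omega>. f (X (real i / 2^l) \<omega>)) \<in> borel_measurable M" for i l
    by (rule borel_measurable_comp_X[OF f_cont]) simp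
  have D_sets: "D l \<in> sets M" for l
    unfolding D_def by measurable
  then show "(\<Union>l. D l) \<in> sets M"
    by blast
  have "incseq D"
  proof (rule incseq_SucI, rule subsetI)
    fix l \<omega> assume "\<omega> \<in> D l"
    then show "\<omega> \<in> D (Suc l)"
      using dyadic_exceed_Suc[of l "\<lambda>s. c \<le> f (X s \<omega>)"] by (simp add: D_def)
  qed
  moreover have "measure M (D l) \<le> f x / c" for l
    using exceed_grid_bound[OF f \<open>c > 0\<close>, of "l * 2^l" l] \<open>c > 0\<close>
    by (simp add: D_def field_simps mult.commute)
  ultimately show "measure M (\<Union>l. D l) \<le> f x / c"
    using D_sets by (intro measure_UN_incseq_le) auto
  fix \<omega> and t :: real assume \<omega>: "\<omega> \<in> space M - (\<Union>l. D l)" and "t \<ge> 0"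
  show "f (X t \<omega>) \<le> c"
  proof (rule ccontr)
    have "continuous_on {0..} (\<lambda>t. f (X t \<omega>))"
      using \<omega> by (intro continuous_on_compose2[OF f_cont X_continuous]) auto
    moreover assume "\<not> ?thesis"
    ultimately obtain l where "\<exists>i\<le>l * 2^l. c \<le> f (X (real i / 2^l) \<omega>)"
      using continuous_path_exceeds_on_grid[of "\<lambda>t. f (X t \<omega>)" t c] \<open>t \<ge> 0\<close> by force
    with \<omega> show False
      by (auto simp: D_def)
  qed
qed

lemma rise_exceptional_set:
  assumes f: "bounded_superharmonic A \<sigma> f g H" and "0 < b" "b \<le> c"
  obtains B where "B \<in> sets M" "measure M B \<le> b / c"
    "\<And>\<omega> r t. \<omega> \<in> space M - B \<Longrightarrow> 0 \<le> r \<Longrightarrow> r \<le> t \<Longrightarrow> f (X r \<omega>) < b \<Longrightarrow> f (X t \<omega>) \<le> c"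
proof
  note f_cont = bounded_superharmonicD(2)[OF f]
  define D where "D l = {\<omega>\<in>space M. \<exists>j\<le>l * 2^l. f (X (real j / 2^l) \<omega>) < b \<and>
      (\<exists>i\<in>{j..l * 2^l}. c \<le> f (X (real i / 2^l) \<omega>))}" for l
  have [measurable]: "(\<lambda>\<omega>. f (X (real i / 2^l) \<omega>)) \<in> borel_measurable M" for i l
    by (rule borel_measurable_comp_X[OF f_cont]) simp
  have D_sets: "D l \<in> sets M" for l
    unfolding D_def by measurable
  then show "(\<Union>l. D l) \<in> sets M"
    by blast
  have "incseq D"
  proof (rule incseq_SucI, rule subsetI)
    fix l \<omega> assume "\<omega> \<in> D l"
    then show "\<omega> \<in> D (Suc l)"
      using dyadic_rise_Suc[of l "\<lambda>s. f (X s \<omega>) < b" "\<lambda>s. c \<le> f (X s \<omega>)"] by (simp add: D_def)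
  qed
  moreover have "measure M (D l) \<le> b / c" for l
    using rise_grid_bound[OF f assms(2,3), of "l * 2^l" l] assms(2,3)
    by (simp add: D_def field_simps mult.commute)
  ultimately show "measure M (\<Union>l. D l) \<le> b / c"
    using D_sets by (intro measure_UN_incseq_le) auto
  fix \<omega> and r t :: real
  assume \<omega>: "\<omega> \<in> space M - (\<Union>l. D l)" and "0 \<le> r" "r \<le> t" "f (X r \<omega>) < b"
  show "f (X t \<omega>) \<le> c"
  proof (rule ccontr)
    have "continuous_on {0..} (\<lambda>t. f (X t \<omega>))"
      using \<omega> by (intro continuous_on_compose2[OF f_cont X_continuous]) auto
    moreover assume "\<not> ?thesis"
    ultimately obtain l where
      "\<exists>j\<le>l * 2^l. f (X (real j / 2^l) \<omega>) < b \<and> (\<exists>i\<in>{j..l * 2^l}. c \<le> f (X (real i / 2^l) \<omega>))"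
      using continuous_path_rises_on_grid[of "\<lambda>t. f (X t \<omega>)" r t b c] \<open>0 \<le> r\<close> \<open>r \<le> t\<close>
        \<open>f (X r \<omega>) < b\<close> by force
    with \<omega> show False
      by (auto simp: D_def)
  qed
qed

lemma generator_integral_exceptional_set:
  assumes f: "bounded_superharmonic A \<sigma> f g H" and "K > 0" "T \<ge> 0"
  obtains B where "B \<in> sets M" "measure M B \<le> 1 / K"
    "\<And>\<omega>. \<omega> \<in> space M - B \<Longrightarrow> - K < integral {0..T} (\<lambda>r. rep_gen A \<sigma> g H (X r \<omega>))"
proof
  note C2 = bounded_superharmonicD(1)[OF f] and bounds = bounded_superharmonicD(4-7)[OF f]
  define u where "u \<omega> = - integral {0..T} (\<lambda>r. rep_gen A \<sigma> g H (X r \<omega>))" for \<omega>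
  have u: "integrable M u"
    unfolding u_def using dynkin_formula(1)[OF C2 bounds(3) \<open>T \<ge> 0\<close>] by simp
  then show "{\<omega>\<in>space M. K \<le> u \<omega>} \<in> sets M"
    by measurable
  have u_nonneg: "0 \<le> u \<omega>" if "\<omega> \<in> space M" for \<omega>
    using path_integral_antimono[OF bounded_superharmonicD(3)[OF f] bounds(4) that order_refl \<open>T \<ge> 0\<close>]
    by (simp add: u_def)
  have "(\<integral>\<omega>. u \<omega> \<partial>M) = f x - (\<integral>\<omega>. f (X T \<omega>) \<partial>M)"
    unfolding u_def using dynkin_formula(2)[OF C2 bounds(3) \<open>T \<ge> 0\<close>] by simp
  also have "\<dots> \<le> 1"
  proof -
    have "0 \<le> (\<integral>\<omega>. f (X T \<omega>) \<partial>M)"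
      using bounds(1) X_open_simplex \<open>T \<ge> 0\<close> by (intro Bochner_Integration.integral_nonneg) auto
    then show ?thesis
      using bounds(2)[OF x_open_simplex] by linarith
  qed
  finally have "(\<integral>\<omega>. u \<omega> \<partial>M) \<le> 1" .
  have "measure M {\<omega>\<in>space M. K \<le> u \<omega>} \<le> (\<integral>\<omega>. u \<omega> \<partial>M) / K"
    using u_nonneg \<open>K > 0\<close> by (intro integral_Markov_inequality_measure[OF u sets.top]) auto
  also have "\<dots> \<le> 1 / K"
    using \<open>(\<integral>\<omega>. u \<omega> \<partial>M) \<le> 1\<close> \<open>K > 0\<close> by (simp add: divide_right_mono)
  finally show "measure M {\<omega>\<in>space M. K \<le> u \<omega>} \<le> 1 / K" .
  show "- K < integral {0..T} (\<lambda>r. rep_gen A \<sigma> g H (X r \<omega>))"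
    if "\<omega> \<in> space M - {\<omega>\<in>space M. K \<le> u \<omega>}" for \<omega>
    using that by (auto simp: u_def)
qed

lemma target_event_sets:
  assumes "open U"
  shows "{\<omega>\<in>space M. (\<forall>t\<ge>0. X t \<omega> \<in> U) \<and> ((\<lambda>t. X t \<omega>) \<longlongrightarrow> z) at_top} \<in> sets M"
proof -
  have [measurable]: "(\<lambda>\<omega>. dist (X (real i / 2^l) \<omega>) z) \<in> borel_measurable M"
    "(\<lambda>\<omega>. infdist (X (real i / 2^l) \<omega>) (- U)) \<in> borel_measurable M" for i l
    by (auto intro!: borel_measurable_comp_X continuous_intros)
  have stays: "{\<omega>\<in>space M. \<forall>t\<ge>0. X t \<omega> \<in> U} \<in> sets M"
  proof (cases "U = UNIV")
    case False
    then have "{\<omega>\<in>space M. \<forall>t\<ge>0. X t \<omega> \<in> U} = {\<omega>\<in>space M. \<forall>N::nat. \<exists>m::nat. \<forall>i l.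
        real i / 2^l \<le> real N \<longrightarrow> inverse (real (Suc m)) \<le> infdist (X (real i / 2^l) \<omega>) (- U)}"
      using continuous_path_in_open_iff_dyadic[OF X_continuous \<open>open U\<close>] by blast
    also have "\<dots> \<in> sets M"
      by measurable
    finally show ?thesis .
  qed simp
  have "{\<omega>\<in>space M. ((\<lambda>t. X t \<omega>) \<longlongrightarrow> z) at_top} = {\<omega>\<in>space M. \<forall>m::nat. \<exists>N::nat. \<forall>i l.
      real N \<le> real i / 2^l \<longrightarrow> dist (X (real i / 2^l) \<omega>) z \<le> inverse (real (Suc m))}"
    using continuous_path_tendsto_iff_dyadic[OF X_continuous] by blast
  also have "\<dots> \<in> sets M"
    by measurable
  finally have "{\<omega>\<in>space M. ((\<lambda>t. X t \<omega>) \<longlongrightarrow> z) at_top} \<in> sets M" .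
  with stays show ?thesis
    by (auto simp: Collect_conj_eq[symmetric] elim: back_subst[of "\<lambda>S. S \<in> sets M"])
qed

end

section \<open>Stability of the vertex\<close>

context replicator_process
begin

lemma stays_near_vertex:
  assumes "0 < a" "a < b" "0 \<le> c"
    and drift: "\<And>y. y \<in> open_simplex \<Longrightarrow> 1 - y$k < b \<Longrightarrow> c * (1 - y$k) \<le> rep_drift A \<sigma> y $ k"
  obtains B where "B \<in> sets M" "measure M B \<le> 2 * (1 - x$k) / a"
    "\<And>\<omega> t. \<omega> \<in> space M - B \<Longrightarrow> t \<ge> 0 \<Longrightarrow> 1 - X t \<omega> $ k \<le> a / 2"
proof -
  note f = bounded_superharmonic_lyap[OF assms]
  have "a/2 > 0"
    using \<open>0 < a\<close> by simp
  obtain B where B: "B \<in> sets M" "measure M B \<le> lyap a b k x / (a/2)"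
    and low: "\<And>\<omega> t. \<omega> \<in> space M - B \<Longrightarrow> t \<ge> 0 \<Longrightarrow> lyap a b k (X t \<omega>) \<le> a/2"
    using exceed_exceptional_set[OF f \<open>a/2 > 0\<close>] by blast
  show ?thesis
  proof
    show "B \<in> sets M"
      by (fact B(1))
    have "lyap a b k x / (a/2) \<le> (1 - x$k) / (a/2)"
      using lyap_bounds(2)[OF assms(1,2) x_open_simplex] \<open>0 < a\<close> by (intro divide_right_mono) auto
    with B(2) show "measure M B \<le> 2 * (1 - x$k) / a"
      by (simp add: mult.commute)
    fix \<omega> and t :: real assume "\<omega> \<in> space M - B" "t \<ge> 0"
    then have "smooth_cap a b (1 - X t \<omega> $ k) \<le> a/2"
      using low by (simp add: lyap_def)
    then show "1 - X t \<omega> $ k \<le> a/2"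
      using smooth_cap_below[OF assms(2), of "1 - X t \<omega> $ k"] smooth_cap_ge[OF assms(2), of "1 - X t \<omega> $ k"]
        \<open>0 < a\<close> by (cases "1 - X t \<omega> $ k \<le> a") auto
  qed
qed

text \<open>While \<open>1 - y\<^sub>k \<le> a\<close> the generator of the Lyapunov function is minus the drift, hence at
  most \<open>-c (1 - y\<^sub>k)\<close>; staying above \<open>\<theta>\<close> on \<open>[0, T]\<close> would push the integral down to
  \<open>-c \<theta> T\<close>.\<close>

lemma path_reaches_level:
  assumes "a < b" "c \<ge> 0" "\<omega> \<in> space M" "T \<ge> 0"
    and drift: "\<And>y. y \<in> open_simplex \<Longrightarrow> 1 - y$k < b \<Longrightarrow> c * (1 - y$k) \<le> rep_drift A \<sigma> y $ k"
    and near: "\<And>s. s \<ge> 0 \<Longrightarrow> 1 - X s \<omega> $ k \<le> a"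
    and integral: "- (c * \<theta> * T) < integral {0..T} (\<lambda>r. rep_gen A \<sigma> (lyap_grad a b k) (lyap_hess a b k) (X r \<omega>))"
  shows "\<exists>r\<in>{0..T}. 1 - X r \<omega> $ k < \<theta>"
proof (rule ccontr)
  assume "\<not> ?thesis"
  then have far: "\<theta> \<le> 1 - X r \<omega> $ k" if "r \<in> {0..T}" for r
    using that by (auto simp: not_less)
  have "integral {0..T} (\<lambda>r. rep_gen A \<sigma> (lyap_grad a b k) (lyap_hess a b k) (X r \<omega>)) \<le> integral {0..T} (\<lambda>r. - (c * \<theta>))"
  proof (rule integral_le)
    show "(\<lambda>r. rep_gen A \<sigma> (lyap_grad a b k) (lyap_hess a b k) (X r \<omega>)) integrable_on {0..T}"
      by (rule integrable_on_path[OF C2_with_continuous_on(2)[OF C2_with_lyap] assms(3)])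
    fix r assume r: "r \<in> {0..T}"
    then have "rep_gen A \<sigma> (lyap_grad a b k) (lyap_hess a b k) (X r \<omega>) = - rep_drift A \<sigma> (X r \<omega>) $ k"
      using rep_gen_lyap_below[OF assms(1) near] by simp
    also have "\<dots> \<le> - (c * (1 - X r \<omega> $ k))"
      using drift[OF X_open_simplex[OF assms(3)]] near[of r] assms(1) r by simp
    also have "\<dots> \<le> - (c * \<theta>)"
      using far[OF r] \<open>c \<ge> 0\<close> by (simp add: mult_left_mono)
    finally show "rep_gen A \<sigma> (lyap_grad a b k) (lyap_hess a b k) (X r \<omega>) \<le> - (c * \<theta>)" .
  qed (intro integrable_continuous_interval continuous_intros)
  then show False
    using integral assms(4) by (simp add: mult.commute mult.left_commute)
qed

lemma eventually_near_vertex: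
  assumes "0 < a" "a < b" "c > 0" "0 < \<theta>" "\<theta> \<le> \<eta>" "T > 0"
    and drift: "\<And>y. y \<in> open_simplex \<Longrightarrow> 1 - y$k < b \<Longrightarrow> c * (1 - y$k) \<le> rep_drift A \<sigma> y $ k"
  obtains B where "B \<in> sets M" "measure M B \<le> \<theta> / \<eta> + 1 / (c * \<theta> * T)"
    "\<And>\<omega> t. \<omega> \<in> space M - B \<Longrightarrow> (\<And>s. s \<ge> 0 \<Longrightarrow> 1 - X s \<omega> $ k \<le> a) \<Longrightarrow> T \<le> t \<Longrightarrow> 1 - X t \<omega> $ k \<le> \<eta>"
proof -
  note f = bounded_superharmonic_lyap[OF assms(1,2) less_imp_le[OF \<open>c > 0\<close>] drift]
  obtain B1 where B1: "B1 \<in> sets M" "measure M B1 \<le> \<theta> / \<eta>"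
    and rise: "\<And>\<omega> r t. \<omega> \<in> space M - B1 \<Longrightarrow> 0 \<le> r \<Longrightarrow> r \<le> t \<Longrightarrow> lyap a b k (X r \<omega>) < \<theta> \<Longrightarrow>
      lyap a b k (X t \<omega>) \<le> \<eta>"
    using rise_exceptional_set[OF f \<open>0 < \<theta>\<close> \<open>\<theta> \<le> \<eta>\<close>] by blast
  have "c * \<theta> * T > 0"
    using assms(3,4,6) by simp
  then obtain B2 where B2: "B2 \<in> sets M" "measure M B2 \<le> 1 / (c * \<theta> * T)"
    and integral: "\<And>\<omega>. \<omega> \<in> space M - B2 \<Longrightarrow>
      - (c * \<theta> * T) < integral {0..T} (\<lambda>r. rep_gen A \<sigma> (lyap_grad a b k) (lyap_hess a b k) (X r \<omega>))"
    using generator_integral_exceptional_set[OF f _ less_imp_le[OF \<open>T > 0\<close>]] by blast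
  show ?thesis
  proof
    show "B1 \<union> B2 \<in> sets M"
      using B1(1) B2(1) by blast
    show "measure M (B1 \<union> B2) \<le> \<theta> / \<eta> + 1 / (c * \<theta> * T)"
      using measure_Un_le[OF B1(1) B2(1)] B1(2) B2(2) by linarith
    fix \<omega> t
    assume \<omega>: "\<omega> \<in> space M - (B1 \<union> B2)" and near: "\<And>s. s \<ge> 0 \<Longrightarrow> 1 - X s \<omega> $ k \<le> a" and "T \<le> t"
    have lyap_eq: "lyap a b k (X s \<omega>) = 1 - X s \<omega> $ k" if "s \<ge> 0" for s
      using smooth_cap_below[OF assms(2) near[OF that]] by (simp add: lyap_def)
    obtain r where "r \<in> {0..T}" "1 - X r \<omega> $ k < \<theta>"
      using path_reaches_level[OF assms(2) less_imp_le[OF \<open>c > 0\<close>] _ less_imp_le[OF \<open>T > 0\<close>] drift near]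
        \<omega> integral by blast
    then have "lyap a b k (X t \<omega>) \<le> \<eta>"
      using \<omega> \<open>T \<le> t\<close> lyap_eq by (intro rise[of \<omega> r t]) auto
    then show "1 - X t \<omega> $ k \<le> \<eta>"
      using lyap_eq \<open>T \<le> t\<close> \<open>T > 0\<close> by simp
  qed
qed

lemma late_exceptional_sets:
  assumes "0 < a" "a < b" "c > 0" "0 < \<epsilon>" "\<epsilon> \<le> 1"
    and drift: "\<And>y. y \<in> open_simplex \<Longrightarrow> 1 - y$k < b \<Longrightarrow> c * (1 - y$k) \<le> rep_drift A \<sigma> y $ k"
  obtains B T where "\<And>m. B m \<in> sets M" "\<And>m. measure M (B m) \<le> \<epsilon> / 2 ^ Suc m"
    "\<And>m \<omega> t. \<omega> \<in> space M - B m \<Longrightarrow> (\<And>s. s \<ge> 0 \<Longrightarrow> 1 - X s \<omega> $ k \<le> a) \<Longrightarrow> T m \<le> t \<Longrightarrow>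
      1 - X t \<omega> $ k \<le> inverse (real (Suc m))"
proof -
  define \<eta> \<theta> T where "\<eta> m = inverse (real (Suc m))" and "\<theta> m = \<epsilon> * \<eta> m / 2 ^ (m + 2)"
    and "T m = 2 ^ (m + 2) / (\<epsilon> * c * \<theta> m)" for m
  have "\<exists>B. B \<in> sets M \<and> measure M B \<le> \<epsilon> / 2 ^ Suc m \<and> (\<forall>\<omega> t. \<omega> \<in> space M - B \<longrightarrow>
      (\<forall>s\<ge>0. 1 - X s \<omega> $ k \<le> a) \<longrightarrow> T m \<le> t \<longrightarrow> 1 - X t \<omega> $ k \<le> \<eta> m)" for m
  proof -
    have "\<eta> m > 0" "\<theta> m > 0" "T m > 0"
      using \<open>0 < \<epsilon>\<close> \<open>c > 0\<close> by (simp_all add: \<eta>_def \<theta>_def T_def)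
    moreover have "\<theta> m \<le> \<eta> m"
    proof -
      have "\<epsilon> \<le> 2 ^ (m + 2)"
        using \<open>\<epsilon> \<le> 1\<close> one_le_power[of "2::real" "m + 2"] by linarith
      then show ?thesis
        using \<open>\<eta> m > 0\<close> by (simp add: \<theta>_def field_simps mult_right_mono)
    qed
    moreover have "\<theta> m / \<eta> m + 1 / (c * \<theta> m * T m) = \<epsilon> / 2 ^ Suc m"
      using \<open>\<eta> m > 0\<close> \<open>\<theta> m > 0\<close> \<open>0 < \<epsilon>\<close> \<open>c > 0\<close> by (simp add: \<theta>_def T_def field_simps power_add)
    ultimately show ?thesis
      using eventually_near_vertex[OF assms(1-3) _ _ _ drift, of "\<theta> m" "\<eta> m" "T m"] by metis
  qed
  then obtain B where "\<And>m. B m \<in> sets M" "\<And>m. measure M (B m) \<le> \<epsilon> / 2 ^ Suc m"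
    "\<And>m \<omega> t. \<omega> \<in> space M - B m \<Longrightarrow> (\<forall>s\<ge>0. 1 - X s \<omega> $ k \<le> a) \<Longrightarrow> T m \<le> t \<Longrightarrow> 1 - X t \<omega> $ k \<le> \<eta> m"
    by metis
  then show ?thesis
    using that[of B T] by (simp add: \<eta>_def)
qed

lemma path_stable_if_near:
  assumes "\<omega> \<in> space M" "cball (axis k 1) a \<subseteq> U"
    and near: "\<And>t. t \<ge> 0 \<Longrightarrow> 1 - X t \<omega> $ k \<le> a / 2"
    and late: "\<And>m. \<forall>\<^sub>F t in at_top. 1 - X t \<omega> $ k \<le> inverse (real (Suc m))"
  shows "(\<forall>t\<ge>0. X t \<omega> \<in> U) \<and> ((\<lambda>t. X t \<omega>) \<longlongrightarrow> axis k 1) at_top"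
proof safe
  fix t :: real assume "t \<ge> 0"
  then have "dist (X t \<omega>) (axis k 1) \<le> 2 * (1 - X t \<omega> $ k)"
    using assms(1) by (intro dist_axis_le_open_simplex X_open_simplex)
  then have "dist (axis k 1) (X t \<omega>) \<le> a"
    using near[OF \<open>t \<ge> 0\<close>] by (simp add: dist_commute)
  then show "X t \<omega> \<in> U"
    using assms(2) by auto
next
  have in_simplex: "\<forall>\<^sub>F t in at_top. X t \<omega> \<in> open_simplex"
    using eventually_ge_at_top[of 0] by eventually_elim (use X_open_simplex assms(1) in auto)
  have "\<forall>\<^sub>F t in at_top. 0 \<le> 1 - X t \<omega> $ k"
    using in_simplex by eventually_elim (simp add: open_simplex_nth_le_1)
  then have "((\<lambda>t. 1 - X t \<omega> $ k) \<longlongrightarrow> 0) at_top"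
    by (rule tendsto_zero_if_eventually_le_inverse[OF late])
  with in_simplex show "((\<lambda>t. X t \<omega>) \<longlongrightarrow> axis k 1) at_top"
    by (rule tendsto_axis_open_simplex)
qed

lemma vertex_stable_with_probability:
  assumes "0 < a" "a < b" "c > 0" "0 < \<epsilon>" "\<epsilon> \<le> 1"
    and drift: "\<And>y. y \<in> open_simplex \<Longrightarrow> 1 - y$k < b \<Longrightarrow> c * (1 - y$k) \<le> rep_drift A \<sigma> y $ k"
    and U: "open U" "cball (axis k 1) a \<subseteq> U"
    and x: "1 - x$k \<le> \<epsilon> * a / 4"
  shows "1 - \<epsilon> \<le> measure M {\<omega>\<in>space M. (\<forall>t\<ge>0. X t \<omega> \<in> U) \<and> ((\<lambda>t. X t \<omega>) \<longlongrightarrow> axis k 1) at_top}"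
proof -
  obtain B0 where B0: "B0 \<in> sets M" "measure M B0 \<le> 2 * (1 - x$k) / a"
    and near: "\<And>\<omega> t. \<omega> \<in> space M - B0 \<Longrightarrow> t \<ge> 0 \<Longrightarrow> 1 - X t \<omega> $ k \<le> a / 2"
    using stays_near_vertex[OF assms(1,2) less_imp_le[OF \<open>c > 0\<close>] drift] by blast
  obtain B T where B: "\<And>m. B m \<in> sets M" "\<And>m. measure M (B m) \<le> (\<epsilon> / 2) / 2 ^ Suc m"
    and late: "\<And>m \<omega> t. \<omega> \<in> space M - B m \<Longrightarrow> (\<And>s. s \<ge> 0 \<Longrightarrow> 1 - X s \<omega> $ k \<le> a) \<Longrightarrow> T m \<le> t \<Longrightarrow>
      1 - X t \<omega> $ k \<le> inverse (real (Suc m))"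
    using late_exceptional_sets[OF assms(1-3) _ _ drift, of "\<epsilon> / 2"] assms(4,5) by auto
  define bad where "bad = B0 \<union> (\<Union>m. B m)"
  have "bad \<in> sets M"
    using B0(1) B(1) by (auto simp: bad_def)
  have "measure M B0 \<le> 2 * (\<epsilon> * a / 4) / a"
    using B0(2) divide_right_mono[OF mult_left_mono[OF x], of 2 a] \<open>0 < a\<close> by linarith
  then have "measure M B0 \<le> \<epsilon> / 2"
    using \<open>0 < a\<close> by simp
  moreover have "measure M (\<Union>m. B m) \<le> \<epsilon> / 2"
    using B by (intro measure_UN_le_halving) auto
  ultimately have "measure M bad \<le> \<epsilon>"
    using measure_Un_le[OF B0(1), of "\<Union>m. B m"] B(1) by (auto simp: bad_def)
  have "space M - bad \<subseteq> {\<omega>\<in>space M. (\<forall>t\<ge>0. X t \<omega> \<in> U) \<and> ((\<lambda>t. X t \<omega>) \<longlongrightarrow> axis k 1) at_top}"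
  proof safe
    fix \<omega> assume "\<omega> \<in> space M" "\<omega> \<notin> bad"
    then have \<omega>: "\<omega> \<in> space M - B0" "\<And>m. \<omega> \<in> space M - B m"
      by (auto simp: bad_def)
    have below_a: "1 - X s \<omega> $ k \<le> a" if "s \<ge> 0" for s
      using near[OF \<omega>(1) that] \<open>0 < a\<close> by simp
    have "\<forall>\<^sub>F t in at_top. 1 - X t \<omega> $ k \<le> inverse (real (Suc m))" for m
      using eventually_ge_at_top[of "T m"] by eventually_elim (rule late[OF \<omega>(2) below_a])
    then have stable: "(\<forall>t\<ge>0. X t \<omega> \<in> U) \<and> ((\<lambda>t. X t \<omega>) \<longlongrightarrow> axis k 1) at_top"
      using path_stable_if_near[OF _ U(2) near[OF \<omega>(1)]] \<omega>(1) by blast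
    then show "X t \<omega> \<in> U" if "t \<ge> 0" for t
      using that by blast
    show "((\<lambda>t. X t \<omega>) \<longlongrightarrow> axis k 1) at_top"
      using stable by blast
  qed
  then have "measure M (space M - bad) \<le>
      measure M {\<omega>\<in>space M. (\<forall>t\<ge>0. X t \<omega> \<in> U) \<and> ((\<lambda>t. X t \<omega>) \<longlongrightarrow> axis k 1) at_top}"
    by (rule finite_measure_mono[OF _ target_event_sets[OF U(1)]])
  then show ?thesis
    using \<open>bad \<in> sets M\<close> \<open>measure M bad \<le> \<epsilon>\<close> prob_compl by simp
qed

end

lemma replicator_vertex_stochastically_stable:
  assumes gap: "\<forall>j. j \<noteq> k \<longrightarrow> A$k$k > A$j$k + (\<sigma>$k)^2" and U: "open U" "axis k 1 \<in> U" and "\<epsilon> > 0"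
  obtains V where "open V" "axis k 1 \<in> V"
    "\<And>x (M :: 'w measure) X. x \<in> V \<inter> open_simplex \<Longrightarrow> replicator_solution A \<sigma> x M X \<Longrightarrow>
       1 - \<epsilon> \<le> measure M {\<omega>\<in>space M. (\<forall>t\<ge>0. X t \<omega> \<in> U) \<and> ((\<lambda>t. X t \<omega>) \<longlongrightarrow> axis k 1) at_top}"
proof -
  obtain \<beta> c where "\<beta> > 0" "c > 0"
    and drift: "\<And>y. y \<in> open_simplex \<Longrightarrow> 1 - y$k < \<beta> \<Longrightarrow> c * (1 - y$k) \<le> rep_drift A \<sigma> y $ k"
    using rep_drift_vertex_lower_bound[OF gap] by blast
  obtain r where "r > 0" "cball (axis k 1) r \<subseteq> U"
    using U open_contains_cball by blast
  define a e where "a = min r (\<beta> / 2)" and "e = min \<epsilon> 1"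
  have a: "0 < a" "a < \<beta>" "cball (axis k 1) a \<subseteq> U"
    using \<open>r > 0\<close> \<open>\<beta> > 0\<close> \<open>cball (axis k 1) r \<subseteq> U\<close> by (auto simp: a_def)
  have e: "0 < e" "e \<le> 1" "e \<le> \<epsilon>"
    using \<open>\<epsilon> > 0\<close> by (auto simp: e_def)
  have "1 - \<epsilon> \<le> measure M {\<omega>\<in>space M. (\<forall>t\<ge>0. X t \<omega> \<in> U) \<and> ((\<lambda>t. X t \<omega>) \<longlongrightarrow> axis k 1) at_top}"
    if x: "x \<in> ball (axis k 1) (e * a / 4) \<inter> open_simplex" and "replicator_solution A \<sigma> x M X"
    for x and M :: "'w measure" and X
  proof -
    interpret replicator_process A \<sigma> x M X
      by unfold_locales fact
    have "1 - x$k \<le> norm (x - axis k 1)"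
      using component_le_norm_cart[of "x - axis k 1" k] by simp
    then have "1 - x$k \<le> e * a / 4"
      using x by (simp add: dist_norm norm_minus_commute)
    then show ?thesis
      using vertex_stable_with_probability[OF a(1,2) \<open>c > 0\<close> e(1,2) drift U(1) a(3)] e(3) by linarith
  qed
  moreover have "open (ball (axis k 1) (e * a / 4))" "axis k 1 \<in> ball (axis k 1) (e * a / 4)"
    using a e by simp_all
  ultimately show thesis
    using that by blast
qed

theorem theorem4p1:
  fixes A :: "real^'n^'n" and \<sigma> :: "real^'n" and k :: 'n
  assumes "CARD('n) \<ge> 2"
    and "\<forall>j. \<sigma>$j > 0"
    and "strict_nash A (axis k 1)"
    and "\<forall>j. j \<noteq> k \<longrightarrow> A$k$k > A$j$k + (\<sigma>$k)^2"
  shows "\<forall>U. open U \<and> axis k 1 \<in> U \<longrightarrow> (\<forall>\<epsilon>>0. \<exists>V. open V \<and> axis k 1 \<in> V \<and>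
           (\<forall>x \<in> V \<inter> open_simplex. \<forall>(M :: 'w measure) X. replicator_solution A \<sigma> x M X \<longrightarrow>
              measure M {\<omega>\<in>space M. (\<forall>t\<ge>0. X t \<omega> \<in> U) \<and>
                                   ((\<lambda>t. X t \<omega>) \<longlongrightarrow> axis k 1) at_top} \<ge> 1 - \<epsilon>))"
proof (intro allI impI)
  fix U :: "(real^'n) set" and \<epsilon> :: real
  assume "open U \<and> axis k 1 \<in> U" "\<epsilon> > 0"
  then obtain V where "open V" "axis k 1 \<in> V"
    and stable: "\<And>x (M :: 'w measure) X. x \<in> V \<inter> open_simplex \<Longrightarrow> replicator_solution A \<sigma> x M X \<Longrightarrow>
       1 - \<epsilon> \<le> measure M {\<omega>\<in>space M. (\<forall>t\<ge>0. X t \<omega> \<in> U) \<and> ((\<lambda>t. X t \<omega>) \<longlongrightarrow> axis k 1) at_top}"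
    using replicator_vertex_stochastically_stable[OF assms(4)] by blast
  then show "\<exists>V. open V \<and> axis k 1 \<in> V \<and>
           (\<forall>x \<in> V \<inter> open_simplex. \<forall>(M :: 'w measure) X. replicator_solution A \<sigma> x M X \<longrightarrow>
              measure M {\<omega>\<in>space M. (\<forall>t\<ge>0. X t \<omega> \<in> U) \<and>
                                   ((\<lambda>t. X t \<omega>) \<longlongrightarrow> axis k 1) at_top} \<ge> 1 - \<epsilon>)"
    by blast
qed

end
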